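(* Let $K$ be a local field of characteristic $0$, $D$ a finite-dimensional division $K$-algebra, and $A,H$ finite subgroups of $\mathrm{GL}_n(D)$. Set $C=A\cap H$ and assume $[A:C]>2$ or $[H:C]>2$. Let $\delta:H\to M_n(D)$, $h\mapsto\delta_h$, be such that $\varphi_t:H\to\mathrm{GL}_n(D)$, $h\mapsto h+t\delta_h$ ($t\in K^\times$), is a family of first-order deformations, and assume (i) for $g\in H$: $\delta_g=0$ if and only if $g\in C$; and (ii) $a\,\mathrm{im}(\delta_h)\cap\ker(\delta_{h'})=\{0\}$ for all $a\in A\setminus C$ and $h,h'\in H\setminus C$. Then there exists $N\in\mathbb{R}$ such that for all $t$ with $|t|\ge N$, $\langle A,\varphi_t(H)\rangle\cong A*_C\varphi_t(H)\cong A*_C H$ (the first isomorphism being the canonical map).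
   Context: A first-order deformation of a subgroup $H$ of the unit group of an algebra is a linear map $\varphi$, $h\mapsto h+\delta_h$, where $\delta$ satisfies $\delta_{hk}=\delta_hk+h\delta_k$ and $\delta_h\delta_k=0$ for all $h,k\in H$; such maps are group morphisms. Here $\mathrm{im}(\delta_h)$ and $\ker(\delta_h)$ are the image and kernel of $\delta_h$ acting on $D^n$ (as $D$-subspaces). *)

theory Defs
  imports Main "Jordan_Normal_Form.Matrix"
begin

text \<open>D is modelled as a type of class division_ring; K is a central subfield of D
  (so D is a K-algebra), carrying an absolute value av.\<close>

definition central_subfield :: "'d::division_ring set \<Rightarrow> bool" where
  "central_subfield K \<longleftrightarrow> 0 \<in> K \<and> 1 \<in> K \<and>
     (\<forall>x\<in>K. \<forall>y\<in>K. x + y \<in> K \<and> x - y \<in> K \<and> x * y \<in> K) \<and>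
     (\<forall>x\<in>K. x \<noteq> 0 \<longrightarrow> inverse x \<in> K) \<and>
     (\<forall>x\<in>K. \<forall>d. x * d = d * x)"

definition absolute_value_on :: "'d::division_ring set \<Rightarrow> ('d \<Rightarrow> real) \<Rightarrow> bool" where
  "absolute_value_on K av \<longleftrightarrow>
     (\<forall>x\<in>K. av x \<ge> 0 \<and> (av x = 0 \<longleftrightarrow> x = 0)) \<and>
     (\<forall>x\<in>K. \<forall>y\<in>K. av (x * y) = av x * av y \<and> av (x + y) \<le> av x + av y)"

definition av_converges :: "'d::division_ring set \<Rightarrow> ('d \<Rightarrow> real) \<Rightarrow> (nat \<Rightarrow> 'd) \<Rightarrow> 'd \<Rightarrow> bool" where
  "av_converges K av s l \<longleftrightarrow> (\<forall>e>0. \<exists>M. \<forall>i\<ge>M. av (s i - l) < e)"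

text \<open>Local field: non-discrete (non-trivial absolute value), complete and locally compact
  (some closed ball around 0 is (sequentially) compact) for the metric av(x - y).\<close>
definition is_local_field :: "'d::division_ring set \<Rightarrow> ('d \<Rightarrow> real) \<Rightarrow> bool" where
  "is_local_field K av \<longleftrightarrow> central_subfield K \<and> absolute_value_on K av \<and>
     (\<exists>x\<in>K. 0 < av x \<and> av x < 1) \<and>
     (\<forall>s::nat \<Rightarrow> 'd. (\<forall>i. s i \<in> K) \<longrightarrow> (\<forall>e>0. \<exists>M. \<forall>i\<ge>M. \<forall>j\<ge>M. av (s i - s j) < e) \<longrightarrow>
          (\<exists>l\<in>K. av_converges K av s l)) \<and>
     (\<exists>r>0. \<forall>s::nat \<Rightarrow> 'd. (\<forall>i. s i \<in> K \<and> av (s i) \<le> r) \<longrightarrow>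
          (\<exists>l\<in>K. \<exists>\<sigma>. strict_mono \<sigma> \<and> av_converges K av (s \<circ> \<sigma>) l))"

definition char_zero_ring :: "'d::division_ring itself \<Rightarrow> bool" where
  "char_zero_ring _ \<longleftrightarrow> (\<forall>m::nat. m > 0 \<longrightarrow> (of_nat m :: 'd) \<noteq> 0)"

definition finite_dim_over :: "'d::division_ring set \<Rightarrow> bool" where
  "finite_dim_over K \<longleftrightarrow> (\<exists>bs::'d list. \<forall>d. \<exists>ks. length ks = length bs \<and> set ks \<subseteq> K \<and>
      d = (\<Sum>i<length bs. ks ! i * bs ! i))"

definition GL_mat :: "nat \<Rightarrow> 'd::division_ring mat set" where
  "GL_mat n = {M \<in> carrier_mat n n. \<exists>M'\<in>carrier_mat n n. M * M' = 1\<^sub>m n \<and> M' * M = 1\<^sub>m n}"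

definition finite_subgroup_GL :: "nat \<Rightarrow> 'd::division_ring mat set \<Rightarrow> bool" where
  "finite_subgroup_GL n G \<longleftrightarrow> finite G \<and> G \<subseteq> GL_mat n \<and> 1\<^sub>m n \<in> G \<and>
     (\<forall>g\<in>G. \<forall>h\<in>G. g * h \<in> G) \<and> (\<forall>g\<in>G. \<exists>g'\<in>G. g * g' = 1\<^sub>m n \<and> g' * g = 1\<^sub>m n)"

definition subgroup_GL :: "nat \<Rightarrow> 'd::division_ring mat set \<Rightarrow> bool" where
  "subgroup_GL n G \<longleftrightarrow> G \<subseteq> GL_mat n \<and> 1\<^sub>m n \<in> G \<and>
     (\<forall>g\<in>G. \<forall>h\<in>G. g * h \<in> G) \<and> (\<forall>g\<in>G. \<exists>g'\<in>G. g * g' = 1\<^sub>m n \<and> g' * g = 1\<^sub>m n)"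

definition gen_subgroup :: "nat \<Rightarrow> 'd::division_ring mat set \<Rightarrow> 'd mat set" where
  "gen_subgroup n S = \<Inter>{G. subgroup_GL n G \<and> S \<subseteq> G}"

definition sub_index :: "'d::division_ring mat set \<Rightarrow> 'd mat set \<Rightarrow> nat" where
  "sub_index G C = card ((\<lambda>g. (\<lambda>c. g * c) ` C) ` G)"

definition first_order_deformation :: "nat \<Rightarrow> 'd::division_ring mat set \<Rightarrow> ('d mat \<Rightarrow> 'd mat) \<Rightarrow> bool" where
  "first_order_deformation n H \<delta> \<longleftrightarrow>
     (\<forall>h\<in>H. \<delta> h \<in> carrier_mat n n) \<and>
     (\<forall>h\<in>H. \<forall>k\<in>H. \<delta> (h * k) = \<delta> h * k + h * \<delta> k) \<and>
     (\<forall>h\<in>H. \<forall>k\<in>H. \<delta> h * \<delta> k = 0\<^sub>m n n)"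

definition deform :: "('d::division_ring mat \<Rightarrow> 'd mat) \<Rightarrow> 'd \<Rightarrow> 'd mat \<Rightarrow> 'd mat" where
  "deform \<delta> t h = h + t \<cdot>\<^sub>m \<delta> h"

definition mat_im :: "nat \<Rightarrow> 'd::division_ring mat \<Rightarrow> 'd vec set" where
  "mat_im n M = {M *\<^sub>v v | v. v \<in> carrier_vec n}"

definition mat_ker :: "nat \<Rightarrow> 'd::division_ring mat \<Rightarrow> 'd vec set" where
  "mat_ker n M = {v \<in> carrier_vec n. M *\<^sub>v v = 0\<^sub>v n}"

text \<open>For subgroups A, B of GL_n(D) with common subgroup C, the amalgamated free product
  A *_C B is the quotient of the free monoid on the disjoint union A + B by the congruence
  generated by the multiplication tables of A and B, the identification of the identities
  with the empty word, and the identification of the two copies of C.\<close>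

definition amalg_words :: "'d::division_ring mat set \<Rightarrow> 'd mat set \<Rightarrow> ('d mat + 'd mat) list set" where
  "amalg_words A B = {w. \<forall>x\<in>set w. (case x of Inl a \<Rightarrow> a \<in> A | Inr b \<Rightarrow> b \<in> B)}"

inductive amalg_step :: "nat \<Rightarrow> 'd::division_ring mat set \<Rightarrow> 'd mat set \<Rightarrow> 'd mat set \<Rightarrow>
    ('d mat + 'd mat) list \<Rightarrow> ('d mat + 'd mat) list \<Rightarrow> bool"
  for n A C B where
  mulA: "x \<in> A \<Longrightarrow> y \<in> A \<Longrightarrow> amalg_step n A C B (u @ [Inl x, Inl y] @ v) (u @ [Inl (x * y)] @ v)"
| mulB: "x \<in> B \<Longrightarrow> y \<in> B \<Longrightarrow> amalg_step n A C B (u @ [Inr x, Inr y] @ v) (u @ [Inr (x * y)] @ v)"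
| oneA: "amalg_step n A C B (u @ [Inl (1\<^sub>m n)] @ v) (u @ v)"
| oneB: "amalg_step n A C B (u @ [Inr (1\<^sub>m n)] @ v) (u @ v)"
| amal: "c \<in> C \<Longrightarrow> amalg_step n A C B (u @ [Inl c] @ v) (u @ [Inr c] @ v)"

definition amalg_eq :: "nat \<Rightarrow> 'd::division_ring mat set \<Rightarrow> 'd mat set \<Rightarrow> 'd mat set \<Rightarrow>
    ('d mat + 'd mat) list \<Rightarrow> ('d mat + 'd mat) list \<Rightarrow> bool" where
  "amalg_eq n A C B = equivclp (amalg_step n A C B)"

definition eval_word :: "nat \<Rightarrow> ('d::division_ring mat + 'd mat) list \<Rightarrow> 'd mat" where
  "eval_word n w = foldr (\<lambda>x acc. case_sum id id x * acc) w (1\<^sub>m n)"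

text \<open>The canonical map A *_C B \<rightarrow> <A, B> is an isomorphism (well-defined on classes,
  injective and onto the generated subgroup).\<close>
definition amalg_canonical_iso :: "nat \<Rightarrow> 'd::division_ring mat set \<Rightarrow> 'd mat set \<Rightarrow> 'd mat set \<Rightarrow> bool" where
  "amalg_canonical_iso n A C B \<longleftrightarrow>
     (\<forall>w1\<in>amalg_words A B. \<forall>w2\<in>amalg_words A B.
        eval_word n w1 = eval_word n w2 \<longleftrightarrow> amalg_eq n A C B w1 w2) \<and>
     eval_word n ` amalg_words A B = gen_subgroup n (A \<union> B)"

text \<open>The map A *_C B \<rightarrow> A *_C B' induced by id on A and f on B is an isomorphism
  (well-defined, injective, surjective on classes).\<close>
definition map_word :: "('d mat \<Rightarrow> 'd mat) \<Rightarrow> ('d mat + 'd mat) list \<Rightarrow> ('d mat + 'd mat) list" where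
  "map_word f w = map (map_sum id f) w"

definition amalg_induced_iso :: "nat \<Rightarrow> ('d::division_ring mat \<Rightarrow> 'd mat) \<Rightarrow> 'd mat set \<Rightarrow> 'd mat set \<Rightarrow>
    'd mat set \<Rightarrow> 'd mat set \<Rightarrow> bool" where
  "amalg_induced_iso n f A C B B' \<longleftrightarrow>
     (\<forall>w1\<in>amalg_words A B. \<forall>w2\<in>amalg_words A B.
        amalg_eq n A C B w1 w2 \<longleftrightarrow> amalg_eq n A C B' (map_word f w1) (map_word f w2)) \<and>
     (\<forall>w'\<in>amalg_words A B'. \<exists>w\<in>amalg_words A B. amalg_eq n A C B' (map_word f w) w')"

end

theory Submission
  imports Defs
begin

(* Fix a K-basis of D and let |d| be the sum of the absolute values of the coordinates of d; summing
   over entries gives a norm on D^n for which matrices act boundedly. Since D^n is finite-dimensional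
   over K, a K-linear map R with ker R \<subseteq> ker Q satisfies |Q x| \<le> c |R x|; by hypothesis (ii) this
   gives one constant c with |\<delta>_h x| \<le> c |\<delta>_h' a \<delta>_h x| for all a \<in> A - C and h, h' \<in> H - C.

   Ping-pong: A - C maps the nonzero vectors lying close to the image of some \<delta>_h into the vectors
   expanded by every \<delta>_h, and for large |t| the matrices h + t \<delta>_h (h \<notin> C) map expanded vectors
   back close to the image of \<delta>_h. The two sets are disjoint, so a reduced word beginning and
   ending in the same factor is nontrivial; as one index exceeds 2, every reduced word has such a
   conjugate, and a normal form argument identifies A *_C \<phi>_t(H) with the generated group.
   Finally \<phi>_t is injective on H, since a nontrivial kernel element 1 - t \<delta>_g would be unipotent
   of infinite order in characteristic 0. *)

section \<open>Coordinate norms over the valued subfield\<close>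

lemma smult_mult_mat_vec:
  assumes "M \<in> carrier_mat n m" and "v \<in> carrier_vec m"
  shows "(x \<cdot>\<^sub>m M) *\<^sub>v v = x \<cdot>\<^sub>v (M *\<^sub>v v)"
  using assms by (intro eq_vecI) (auto simp: scalar_prod_def sum_distrib_left mult.assoc)

lemma smult_mult_mat:
  assumes "M \<in> carrier_mat n m" and "N \<in> carrier_mat m p"
  shows "(x \<cdot>\<^sub>m M) * N = x \<cdot>\<^sub>m (M * N)"
  using assms by (intro eq_matI) (auto simp: scalar_prod_def sum_distrib_left mult.assoc)

lemma mult_mat_vec_zero: "M \<in> carrier_mat m n \<Longrightarrow> M *\<^sub>v 0\<^sub>v n = 0\<^sub>v m"
  by (intro eq_vecI) (auto simp: scalar_prod_def)

locale central_valued_subfield =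
  fixes K :: "'d::division_ring set" and av :: "'d \<Rightarrow> real"
  assumes central_subfield: "central_subfield K" and absolute_value: "absolute_value_on K av"
begin

lemma zero_in_K: "0 \<in> K" and one_in_K: "1 \<in> K"
  and K_add: "x \<in> K \<Longrightarrow> y \<in> K \<Longrightarrow> x + y \<in> K"
  and K_diff: "x \<in> K \<Longrightarrow> y \<in> K \<Longrightarrow> x - y \<in> K"
  and K_mult: "x \<in> K \<Longrightarrow> y \<in> K \<Longrightarrow> x * y \<in> K"
  and K_inverse: "x \<in> K \<Longrightarrow> inverse x \<in> K"
  and K_central: "x \<in> K \<Longrightarrow> x * d = d * x"
  using central_subfield unfolding central_subfield_def
  by (simp_all, metis inverse_zero)

lemma K_uminus: "x \<in> K \<Longrightarrow> - x \<in> K"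
  using K_diff[OF zero_in_K, of x] by simp

lemma K_sum: "(\<And>i. i \<in> I \<Longrightarrow> f i \<in> K) \<Longrightarrow> sum f I \<in> K"
  by (induction I rule: infinite_finite_induct) (auto simp: zero_in_K K_add)

lemma av_nonneg: "x \<in> K \<Longrightarrow> av x \<ge> 0"
  and av_eq_0_iff: "x \<in> K \<Longrightarrow> av x = 0 \<longleftrightarrow> x = 0"
  and av_mult: "x \<in> K \<Longrightarrow> y \<in> K \<Longrightarrow> av (x * y) = av x * av y"
  and av_add_le: "x \<in> K \<Longrightarrow> y \<in> K \<Longrightarrow> av (x + y) \<le> av x + av y"
  using absolute_value unfolding absolute_value_on_def by auto

lemma av_pos: "x \<in> K \<Longrightarrow> x \<noteq> 0 \<Longrightarrow> av x > 0"
  using av_nonneg av_eq_0_iff by (simp add: order_less_le)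

lemma av_one: "av 1 = 1"
proof -
  have "av 1 = av 1 * av 1" using av_mult[OF one_in_K one_in_K] by simp
  moreover have "av 1 \<noteq> 0" using av_eq_0_iff[OF one_in_K] by simp
  ultimately show ?thesis by simp
qed

lemma av_uminus: "x \<in> K \<Longrightarrow> av (- x) = av x"
proof -
  assume x: "x \<in> K"
  have m1: "-1 \<in> K" using K_uminus[OF one_in_K] .
  have "av (-1) * av (-1) = 1" using av_mult[OF m1 m1] av_one by simp
  then have "av (-1) = 1"
    using av_nonneg[OF m1] square_eq_1_iff[of "av (-1)"] by auto
  then show ?thesis using av_mult[OF m1 x] by simp
qed

lemma av_diff_le: "x \<in> K \<Longrightarrow> y \<in> K \<Longrightarrow> av (x - y) \<le> av x + av y"
  using av_add_le[of x "- y"] av_uminus[of y] K_uminus[of y] by simp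

lemma av_inverse: "x \<in> K \<Longrightarrow> x \<noteq> 0 \<Longrightarrow> av (inverse x) = 1 / av x"
  using av_mult[OF K_inverse, of x x] av_one av_eq_0_iff[of x]
  by (simp add: eq_divide_eq del: inverse_eq_divide)

definition K_spanning :: "'d set \<Rightarrow> bool" where
  "K_spanning S \<longleftrightarrow> finite S \<and> (\<forall>d. \<exists>k. (\<forall>s\<in>S. k s \<in> K) \<and> d = (\<Sum>s\<in>S. k s * s))"

definition K_independent :: "'d set \<Rightarrow> bool" where
  "K_independent S \<longleftrightarrow> (\<forall>k. (\<forall>s\<in>S. k s \<in> K) \<longrightarrow> (\<Sum>s\<in>S. k s * s) = 0 \<longrightarrow> (\<forall>s\<in>S. k s = 0))"

lemma finite_dim_over_K_spanning:
  assumes "finite_dim_over K" shows "\<exists>S. K_spanning S"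
proof -
  from assms obtain bs :: "'d list" where bs: "\<forall>d. \<exists>ks. length ks = length bs \<and> set ks \<subseteq> K \<and>
      d = (\<Sum>i<length bs. ks ! i * bs ! i)" unfolding finite_dim_over_def by blast
  have "K_spanning (set bs)" unfolding K_spanning_def
  proof (intro conjI allI)
    fix d
    obtain ks where ks: "length ks = length bs" "set ks \<subseteq> K" "d = (\<Sum>i<length bs. ks ! i * bs ! i)"
      using bs by blast
    define k where "k s = (\<Sum>i\<in>{i\<in>{..<length bs}. bs ! i = s}. ks ! i)" for s
    have kK: "\<forall>s\<in>set bs. k s \<in> K" unfolding k_def
      using ks by (auto intro!: K_sum simp: subset_iff)
    have "(\<Sum>s\<in>set bs. k s * s) =
        (\<Sum>s\<in>set bs. \<Sum>i\<in>{i\<in>{..<length bs}. bs ! i = s}. ks ! i * bs ! i)"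
      by (auto simp: k_def sum_distrib_right intro!: sum.cong)
    also have "\<dots> = (\<Sum>i<length bs. ks ! i * bs ! i)"
      by (rule sum.group) auto
    finally have "(\<Sum>s\<in>set bs. k s * s) = (\<Sum>i<length bs. ks ! i * bs ! i)" .
    then show "\<exists>k. (\<forall>s\<in>set bs. k s \<in> K) \<and> d = (\<Sum>s\<in>set bs. k s * s)"
      using kK ks(3) by metis
  qed simp
  then show ?thesis by blast
qed

lemma K_spanning_minimal_independent:
  assumes sp: "K_spanning S" and min: "\<And>T. K_spanning T \<Longrightarrow> card S \<le> card T"
  shows "K_independent S"
  unfolding K_independent_def
proof (intro allI impI ballI, rule ccontr)
  fix k s0 assume kK: "\<forall>s\<in>S. k s \<in> K" and rel: "(\<Sum>s\<in>S. k s * s) = 0"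
    and s0: "s0 \<in> S" and nz: "k s0 \<noteq> 0"
  have fin: "finite S" using sp K_spanning_def by auto
  let ?S' = "S - {s0}"
  have decomp: "(\<Sum>s\<in>S. f s) = f s0 + (\<Sum>s\<in>?S'. f s)" for f :: "'d \<Rightarrow> 'd"
    using fin s0 by (simp add: sum.remove)
  have "k s0 * s0 = - (\<Sum>s\<in>?S'. k s * s)" using rel decomp[of "\<lambda>s. k s * s"]
    by (simp add: eq_neg_iff_add_eq_0)
  then have "s0 = inverse (k s0) * (- (\<Sum>s\<in>?S'. k s * s))"
    using nz by (metis mult.assoc left_inverse mult_1)
  then have s0_eq: "s0 = - (\<Sum>s\<in>?S'. inverse (k s0) * k s * s)"
    by (simp add: sum_distrib_left mult.assoc)
  have "K_spanning ?S'" unfolding K_spanning_def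
  proof (intro conjI allI)
    show "finite ?S'" using fin by simp
    fix d
    obtain c where c: "\<forall>s\<in>S. c s \<in> K" "d = (\<Sum>s\<in>S. c s * s)"
      using sp unfolding K_spanning_def by blast
    define c' where "c' s = c s - c s0 * inverse (k s0) * k s" for s
    have "d = c s0 * s0 + (\<Sum>s\<in>?S'. c s * s)" using c(2) decomp by simp
    also have "c s0 * s0 = - (\<Sum>s\<in>?S'. c s0 * inverse (k s0) * k s * s)"
      by (subst s0_eq) (simp add: sum_distrib_left mult.assoc)
    finally have "d = (\<Sum>s\<in>?S'. c' s * s)"
      unfolding c'_def by (simp add: sum_subtractf left_diff_distrib)
    moreover have "\<forall>s\<in>?S'. c' s \<in> K" unfolding c'_def using c(1) kK s0
      by (auto intro!: K_diff K_mult K_inverse)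
    ultimately show "\<exists>k. (\<forall>s\<in>?S'. k s \<in> K) \<and> d = (\<Sum>s\<in>?S'. k s * s)" by blast
  qed
  then have "card S \<le> card ?S'" by (rule min)
  moreover have "card ?S' < card S" by (metis card_Diff1_less fin s0)
  ultimately show False by simp
qed

lemma obtain_K_basis:
  assumes "finite_dim_over K"
  obtains S where "K_spanning S" "K_independent S"
proof -
  have ex: "\<exists>m S. K_spanning S \<and> card S = m" using finite_dim_over_K_spanning[OF assms] by blast
  define m where "m = (LEAST m. \<exists>S. K_spanning S \<and> card S = m)"
  obtain S where S: "K_spanning S" "card S = m" using LeastI_ex[OF ex] unfolding m_def by blast
  have "card S \<le> card T" if "K_spanning T" for T
  proof -
    have "\<exists>S'. K_spanning S' \<and> card S' = card T" using that by blast
    then have "m \<le> card T" unfolding m_def by (rule Least_le)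
    then show ?thesis using S(2) by simp
  qed
  then show thesis using that S(1) K_spanning_minimal_independent by blast
qed

lemma mult_mat_vec_smult_K:
  assumes M: "M \<in> carrier_mat n m" and v: "v \<in> carrier_vec m" and x: "x \<in> K"
  shows "M *\<^sub>v (x \<cdot>\<^sub>v v) = x \<cdot>\<^sub>v (M *\<^sub>v v)"
  using M v by (intro eq_vecI)
    (auto simp: scalar_prod_def sum_distrib_left intro!: sum.cong, metis K_central x mult.assoc)

lemma mult_mat_smult_K:
  assumes M: "M \<in> carrier_mat n m" and N: "N \<in> carrier_mat m p" and x: "x \<in> K"
  shows "M * (x \<cdot>\<^sub>m N) = x \<cdot>\<^sub>m (M * N)"
  using M N by (intro eq_matI)
    (auto simp: scalar_prod_def sum_distrib_left intro!: sum.cong, metis K_central x mult.assoc)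

end

locale K_basis = central_valued_subfield K av for K :: "'d::division_ring set" and av +
  fixes S :: "'d set"
  assumes spanning: "K_spanning S" and independent: "K_independent S"
begin

lemma finite_basis: "finite S" using spanning K_spanning_def by auto

lemma independentD: "\<forall>s\<in>S. k s \<in> K \<Longrightarrow> (\<Sum>s\<in>S. k s * s) = 0 \<Longrightarrow> s \<in> S \<Longrightarrow> k s = 0"
  using independent unfolding K_independent_def by blast

definition coord :: "'d \<Rightarrow> 'd \<Rightarrow> 'd" where
  "coord d = (SOME k. (\<forall>s\<in>S. k s \<in> K) \<and> d = (\<Sum>s\<in>S. k s * s))"

lemma coord_spec: "(\<forall>s\<in>S. coord d s \<in> K) \<and> d = (\<Sum>s\<in>S. coord d s * s)"
proof -
  have "\<exists>k. (\<forall>s\<in>S. k s \<in> K) \<and> d = (\<Sum>s\<in>S. k s * s)" using spanning K_spanning_def by auto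
  then show ?thesis unfolding coord_def by (rule someI_ex)
qed

lemma coord_in_K: "s \<in> S \<Longrightarrow> coord d s \<in> K" and sum_coord: "d = (\<Sum>s\<in>S. coord d s * s)"
  using coord_spec by auto

lemma coord_unique:
  assumes "\<forall>s\<in>S. k s \<in> K" "d = (\<Sum>s\<in>S. k s * s)" "s \<in> S"
  shows "coord d s = k s"
proof -
  have "(\<Sum>s\<in>S. (coord d s - k s) * s) = 0"
    using sum_coord[of d] assms(2) by (simp add: left_diff_distrib sum_subtractf)
  then have "coord d s - k s = 0"
    using independentD[of "\<lambda>s. coord d s - k s"] assms by (auto intro: K_diff coord_in_K)
  then show ?thesis by simp
qed

lemma coord_add: "s \<in> S \<Longrightarrow> coord (d + e) s = coord d s + coord e s"
  by (rule coord_unique)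
    (auto intro: K_add coord_in_K simp: sum.distrib distrib_right sum_coord[symmetric])

lemma coord_diff: "s \<in> S \<Longrightarrow> coord (d - e) s = coord d s - coord e s"
  by (rule coord_unique)
    (auto intro: K_diff coord_in_K simp: sum_subtractf left_diff_distrib sum_coord[symmetric])

lemma coord_smult: "x \<in> K \<Longrightarrow> s \<in> S \<Longrightarrow> coord (x * d) s = x * coord d s"
proof (rule coord_unique)
  assume x: "x \<in> K"
  have "x * d = x * (\<Sum>s\<in>S. coord d s * s)" using sum_coord by metis
  then show "x * d = (\<Sum>s\<in>S. x * coord d s * s)" by (simp add: sum_distrib_left mult.assoc)
  show "\<forall>s\<in>S. x * coord d s \<in> K" using x by (auto intro: K_mult coord_in_K)
qed

lemma coord_zero: "s \<in> S \<Longrightarrow> coord 0 s = 0"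
  by (rule coord_unique) (auto intro: zero_in_K)

definition dnorm :: "'d \<Rightarrow> real" where "dnorm d = (\<Sum>s\<in>S. av (coord d s))"

lemma dnorm_nonneg: "dnorm d \<ge> 0"
  unfolding dnorm_def by (auto intro!: sum_nonneg av_nonneg coord_in_K)

lemma av_coord_le_dnorm: "s \<in> S \<Longrightarrow> av (coord d s) \<le> dnorm d"
  unfolding dnorm_def using finite_basis by (intro member_le_sum) (auto intro: av_nonneg coord_in_K)

lemma dnorm_zero[simp]: "dnorm 0 = 0"
  unfolding dnorm_def by (simp add: coord_zero av_eq_0_iff zero_in_K)

lemma dnorm_eq_0_iff: "dnorm d = 0 \<longleftrightarrow> d = 0"
proof
  assume "dnorm d = 0"
  then have "\<forall>s\<in>S. av (coord d s) = 0" unfolding dnorm_def using finite_basis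
    by (subst (asm) sum_nonneg_eq_0_iff) (auto intro: av_nonneg coord_in_K)
  then have "\<forall>s\<in>S. coord d s = 0" using av_eq_0_iff coord_in_K by blast
  then show "d = 0" using sum_coord[of d] by simp
qed simp

lemma dnorm_add_le: "dnorm (d + e) \<le> dnorm d + dnorm e"
  unfolding dnorm_def
  by (auto simp: coord_add sum.distrib[symmetric] intro!: sum_mono av_add_le coord_in_K)

lemma dnorm_diff_le: "dnorm (d - e) \<le> dnorm d + dnorm e"
  unfolding dnorm_def
  by (auto simp: coord_diff sum.distrib[symmetric] intro!: sum_mono av_diff_le coord_in_K)

lemma dnorm_smult: "x \<in> K \<Longrightarrow> dnorm (x * d) = av x * dnorm d"
  unfolding dnorm_def
  by (auto simp: coord_smult av_mult coord_in_K sum_distrib_left intro!: sum.cong)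

lemma dnorm_uminus: "dnorm (- d) = dnorm d"
  using dnorm_smult[OF K_uminus[OF one_in_K], of d] av_uminus[OF one_in_K] av_one by simp

lemma dnorm_sum_le: "dnorm (sum f I) \<le> (\<Sum>i\<in>I. dnorm (f i))"
proof (induction I rule: infinite_finite_induct)
  case (insert x F)
  then show ?case using dnorm_add_le[of "f x" "sum f F"] by simp
qed auto

definition dnorm_mult_const :: real where
  "dnorm_mult_const = (\<Sum>s\<in>S. \<Sum>s'\<in>S. dnorm (s * s'))"

lemma dnorm_mult_const_nonneg: "dnorm_mult_const \<ge> 0"
  unfolding dnorm_mult_const_def by (auto intro!: sum_nonneg dnorm_nonneg)

lemma dnorm_basis_mult_le: "s \<in> S \<Longrightarrow> s' \<in> S \<Longrightarrow> dnorm (s * s') \<le> dnorm_mult_const"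
  unfolding dnorm_mult_const_def using finite_basis
  by (intro order_trans[OF _ member_le_sum[of s]] member_le_sum) (auto intro!: dnorm_nonneg sum_nonneg)

lemma dnorm_mult_le: "dnorm (d * e) \<le> dnorm_mult_const * dnorm d * dnorm e"
proof -
  have "d * e = (\<Sum>s\<in>S. coord d s * s) * (\<Sum>s'\<in>S. coord e s' * s')" using sum_coord by metis
  also have "\<dots> = (\<Sum>s\<in>S. \<Sum>s'\<in>S. (coord d s * coord e s') * (s * s'))"
    unfolding sum_product
  proof (intro sum.cong refl)
    fix s s' assume "s \<in> S" "s' \<in> S"
    then have "s * coord e s' = coord e s' * s" using K_central[OF coord_in_K] by metis
    then show "coord d s * s * (coord e s' * s') = coord d s * coord e s' * (s * s')"
      by (metis mult.assoc)
  qed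
  finally have de: "d * e = \<dots>" .
  have "dnorm (d * e) \<le> (\<Sum>s\<in>S. \<Sum>s'\<in>S. dnorm ((coord d s * coord e s') * (s * s')))"
    unfolding de by (rule order_trans[OF dnorm_sum_le]) (intro sum_mono dnorm_sum_le)
  also have "\<dots> = (\<Sum>s\<in>S. \<Sum>s'\<in>S. av (coord d s) * av (coord e s') * dnorm (s * s'))"
    by (intro sum.cong refl) (simp add: dnorm_smult K_mult coord_in_K av_mult)
  also have "\<dots> \<le> (\<Sum>s\<in>S. \<Sum>s'\<in>S. av (coord d s) * av (coord e s') * dnorm_mult_const)"
    by (intro sum_mono mult_left_mono dnorm_basis_mult_le)
      (auto intro!: mult_nonneg_nonneg av_nonneg coord_in_K)
  also have "\<dots> = (\<Sum>s\<in>S. \<Sum>s'\<in>S. av (coord d s) * av (coord e s')) * dnorm_mult_const"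
    by (simp add: sum_distrib_right)
  also have "\<dots> = dnorm_mult_const * dnorm d * dnorm e"
    unfolding dnorm_def by (simp add: sum_product)
  finally show ?thesis .
qed

definition vnorm :: "'d vec \<Rightarrow> real" where "vnorm v = (\<Sum>i<dim_vec v. dnorm (v $ i))"

lemma vnorm_nonneg: "vnorm v \<ge> 0"
  unfolding vnorm_def by (auto intro!: sum_nonneg dnorm_nonneg)

lemma dnorm_le_vnorm: "i < dim_vec v \<Longrightarrow> dnorm (v $ i) \<le> vnorm v"
  unfolding vnorm_def by (intro member_le_sum) (auto intro: dnorm_nonneg)

lemma vnorm_zero[simp]: "vnorm (0\<^sub>v n) = 0"
  unfolding vnorm_def by simp

lemma vnorm_eq_0_iff: "v \<in> carrier_vec n \<Longrightarrow> vnorm v = 0 \<longleftrightarrow> v = 0\<^sub>v n"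
proof
  assume v: "v \<in> carrier_vec n" and "vnorm v = 0"
  then have "\<forall>i<n. dnorm (v $ i) = 0" unfolding vnorm_def
    by (subst (asm) sum_nonneg_eq_0_iff) (auto intro: dnorm_nonneg)
  then show "v = 0\<^sub>v n" using v by (intro eq_vecI) (auto simp: dnorm_eq_0_iff)
qed simp

lemma vnorm_pos: "v \<in> carrier_vec n \<Longrightarrow> v \<noteq> 0\<^sub>v n \<Longrightarrow> vnorm v > 0"
  using vnorm_eq_0_iff vnorm_nonneg by (metis order_less_le)

lemma vnorm_add_le: "v \<in> carrier_vec n \<Longrightarrow> w \<in> carrier_vec n \<Longrightarrow> vnorm (v + w) \<le> vnorm v + vnorm w"
  unfolding vnorm_def by (auto simp: sum.distrib[symmetric] intro!: sum_mono dnorm_add_le)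

lemma vnorm_diff_le: "v \<in> carrier_vec n \<Longrightarrow> w \<in> carrier_vec n \<Longrightarrow> vnorm (v - w) \<le> vnorm v + vnorm w"
  unfolding vnorm_def by (auto simp: sum.distrib[symmetric] intro!: sum_mono dnorm_diff_le)

lemma vnorm_smult: "x \<in> K \<Longrightarrow> vnorm (x \<cdot>\<^sub>v v) = av x * vnorm v"
  unfolding vnorm_def by (auto simp: dnorm_smult sum_distrib_left)

lemma vnorm_minus_commute: "v \<in> carrier_vec n \<Longrightarrow> w \<in> carrier_vec n \<Longrightarrow> vnorm (v - w) = vnorm (w - v)"
  unfolding vnorm_def by (auto intro!: sum.cong) (metis dnorm_uminus minus_diff_eq)

lemma vnorm_le_diff_add: "v \<in> carrier_vec n \<Longrightarrow> w \<in> carrier_vec n \<Longrightarrow> vnorm v \<le> vnorm (v - w) + vnorm w"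
proof -
  assume a: "v \<in> carrier_vec n" "w \<in> carrier_vec n"
  have "v = (v - w) + w" using a by (intro eq_vecI) auto
  then have "vnorm v = vnorm ((v - w) + w)" by simp
  also have "\<dots> \<le> vnorm (v - w) + vnorm w" using a by (intro vnorm_add_le[of _ n]) auto
  finally show ?thesis .
qed

definition mat_bound :: "'d mat \<Rightarrow> real" where
  "mat_bound M = dnorm_mult_const * (\<Sum>i<dim_row M. \<Sum>j<dim_col M. dnorm (M $$ (i, j)))"

lemma mat_bound_nonneg: "mat_bound M \<ge> 0"
  unfolding mat_bound_def
  by (auto intro!: mult_nonneg_nonneg dnorm_mult_const_nonneg sum_nonneg dnorm_nonneg)

lemma vnorm_mult_mat_vec_le:
  assumes M: "M \<in> carrier_mat n n" and v: "v \<in> carrier_vec n"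
  shows "vnorm (M *\<^sub>v v) \<le> mat_bound M * vnorm v"
proof -
  have "vnorm (M *\<^sub>v v) = (\<Sum>i<n. dnorm (\<Sum>j<n. M $$ (i, j) * v $ j))"
    unfolding vnorm_def using M v
    by (auto simp: scalar_prod_def atLeast0LessThan intro!: sum.cong)
  also have "\<dots> \<le> (\<Sum>i<n. \<Sum>j<n. dnorm_mult_const * dnorm (M $$ (i, j)) * vnorm v)"
  proof (intro sum_mono order_trans[OF dnorm_sum_le])
    fix i j assume "j \<in> {..<n}"
    then have "dnorm (v $ j) \<le> vnorm v" using v dnorm_le_vnorm by auto
    then have "dnorm_mult_const * dnorm (M $$ (i, j)) * dnorm (v $ j)
        \<le> dnorm_mult_const * dnorm (M $$ (i, j)) * vnorm v"
      by (intro mult_left_mono) (auto intro: mult_nonneg_nonneg dnorm_mult_const_nonneg dnorm_nonneg)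
    then show "dnorm (M $$ (i, j) * v $ j) \<le> dnorm_mult_const * dnorm (M $$ (i, j)) * vnorm v"
      using dnorm_mult_le[of "M $$ (i, j)" "v $ j"] by linarith
  qed
  also have "\<dots> = mat_bound M * vnorm v" unfolding mat_bound_def using M
    by (simp add: sum_distrib_left sum_distrib_right mult.assoc)
  finally show ?thesis .
qed

end

section \<open>K-spans of vectors and a kernel estimate\<close>

context central_valued_subfield
begin

fun K_span :: "nat \<Rightarrow> 'd vec list \<Rightarrow> 'd vec set" where
  "K_span n [] = {0\<^sub>v n}"
| "K_span n (f # fs) = {x \<cdot>\<^sub>v f + y | x y. x \<in> K \<and> y \<in> K_span n fs}"

lemma K_span_ConsI: "x \<in> K \<Longrightarrow> y \<in> K_span n fs \<Longrightarrow> x \<cdot>\<^sub>v f + y \<in> K_span n (f # fs)"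
  by auto

lemma K_span_carrier: "set fs \<subseteq> carrier_vec n \<Longrightarrow> K_span n fs \<subseteq> carrier_vec n"
  by (induction fs) auto

lemma zero_in_K_span: "set fs \<subseteq> carrier_vec n \<Longrightarrow> 0\<^sub>v n \<in> K_span n fs"
proof (induction fs)
  case (Cons f fs)
  have e: "0\<^sub>v n = 0 \<cdot>\<^sub>v f + 0\<^sub>v n" using Cons by (intro eq_vecI) auto
  show ?case by (subst e, rule K_span_ConsI) (use Cons zero_in_K in auto)
qed simp

lemma K_span_add:
  "set fs \<subseteq> carrier_vec n \<Longrightarrow> u \<in> K_span n fs \<Longrightarrow> w \<in> K_span n fs \<Longrightarrow> u + w \<in> K_span n fs"
proof (induction fs arbitrary: u w)
  case (Cons f fs)
  from Cons.prems obtain x y x' y' where u: "u = x \<cdot>\<^sub>v f + y" "x \<in> K" "y \<in> K_span n fs"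
    and w: "w = x' \<cdot>\<^sub>v f + y'" "x' \<in> K" "y' \<in> K_span n fs" by auto
  have "y \<in> carrier_vec n" "y' \<in> carrier_vec n" "f \<in> carrier_vec n"
    using K_span_carrier u w Cons.prems by auto
  then have "u + w = (x + x') \<cdot>\<^sub>v f + (y + y')" using u w
    by (intro eq_vecI) (auto simp: algebra_simps)
  moreover have "y + y' \<in> K_span n fs" using Cons u w by auto
  ultimately show ?case using u w K_add K_span_ConsI by metis
qed auto

lemma K_span_smult:
  "set fs \<subseteq> carrier_vec n \<Longrightarrow> c \<in> K \<Longrightarrow> u \<in> K_span n fs \<Longrightarrow> c \<cdot>\<^sub>v u \<in> K_span n fs"
proof (induction fs arbitrary: u)
  case (Cons f fs)
  from Cons.prems obtain x y where u: "u = x \<cdot>\<^sub>v f + y" "x \<in> K" "y \<in> K_span n fs" by auto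
  have "y \<in> carrier_vec n" "f \<in> carrier_vec n" using K_span_carrier u Cons.prems by auto
  then have "c \<cdot>\<^sub>v u = (c * x) \<cdot>\<^sub>v f + c \<cdot>\<^sub>v y" using u
    by (intro eq_vecI) (auto simp: algebra_simps)
  then show ?case using Cons u K_mult K_span_ConsI by auto
qed auto

lemma K_span_diff:
  "set fs \<subseteq> carrier_vec n \<Longrightarrow> u \<in> K_span n fs \<Longrightarrow> w \<in> K_span n fs \<Longrightarrow> u - w \<in> K_span n fs"
proof -
  assume a: "set fs \<subseteq> carrier_vec n" "u \<in> K_span n fs" "w \<in> K_span n fs"
  then have "u - w = u + (- 1) \<cdot>\<^sub>v w" using K_span_carrier by (intro eq_vecI) auto
  then show ?thesis using K_span_add[OF a(1,2) K_span_smult[OF a(1) K_uminus[OF one_in_K] a(3)]] by simp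
qed

lemma K_span_Cons_mono:
  "set (f # fs) \<subseteq> carrier_vec n \<Longrightarrow> u \<in> K_span n fs \<Longrightarrow> u \<in> K_span n (f # fs)"
proof -
  assume a: "set (f # fs) \<subseteq> carrier_vec n" "u \<in> K_span n fs"
  then have "u = 0 \<cdot>\<^sub>v f + u" using K_span_carrier[of fs n] by (intro eq_vecI) auto
  then show ?thesis using a zero_in_K K_span_ConsI by metis
qed

lemma in_K_span: "set fs \<subseteq> carrier_vec n \<Longrightarrow> f \<in> set fs \<Longrightarrow> f \<in> K_span n fs"
proof (induction fs)
  case (Cons g fs)
  show ?case
  proof (cases "f = g")
    case True
    have "f = 1 \<cdot>\<^sub>v g + 0\<^sub>v n" using Cons True by (intro eq_vecI) auto
    then show ?thesis using zero_in_K_span[of fs n] Cons one_in_K K_span_ConsI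
      by (metis insert_subset list.simps(15))
  next
    case False
    then show ?thesis using Cons K_span_Cons_mono by auto
  qed
qed simp

lemma K_span_sum:
  assumes "set fs \<subseteq> carrier_vec n" "finite I" "\<And>i. i \<in> I \<Longrightarrow> u i \<in> K_span n fs"
  shows "finsum_vec TYPE('d) n u I \<in> K_span n fs"
  using assms(2,3)
proof (induction I rule: finite_induct)
  case empty
  then show ?case using zero_in_K_span[OF assms(1)] by (simp add: finsum_vec_empty)
next
  case (insert i I)
  have "u \<in> I \<rightarrow> carrier_vec n" "u i \<in> carrier_vec n"
    using insert.prems K_span_carrier[OF assms(1)] by auto
  then show ?case
    using insert K_span_add[OF assms(1)] by (simp add: finsum_vec_insert)
qed

definition K_linear :: "nat \<Rightarrow> nat \<Rightarrow> ('d vec \<Rightarrow> 'd vec) \<Rightarrow> bool" where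
  "K_linear n m L \<longleftrightarrow> (\<forall>v\<in>carrier_vec n. L v \<in> carrier_vec m) \<and>
     (\<forall>v\<in>carrier_vec n. \<forall>w\<in>carrier_vec n. L (v + w) = L v + L w) \<and>
     (\<forall>v\<in>carrier_vec n. \<forall>x\<in>K. L (x \<cdot>\<^sub>v v) = x \<cdot>\<^sub>v L v)"

lemma K_linear_zero: assumes "K_linear n m L" shows "L (0\<^sub>v n) = 0\<^sub>v m"
proof -
  have "0 \<cdot>\<^sub>v 0\<^sub>v n = (0\<^sub>v n :: 'd vec)" by (intro eq_vecI) auto
  moreover have "L (0 \<cdot>\<^sub>v 0\<^sub>v n) = 0 \<cdot>\<^sub>v L (0\<^sub>v n)"
    using assms zero_in_K unfolding K_linear_def by simp
  ultimately have "L (0\<^sub>v n) = 0 \<cdot>\<^sub>v L (0\<^sub>v n)" by simp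
  also have "\<dots> = 0\<^sub>v m"
  proof -
    have "L (0\<^sub>v n) \<in> carrier_vec m" using assms unfolding K_linear_def by auto
    then show ?thesis by (intro eq_vecI) auto
  qed
  finally show ?thesis .
qed

lemma K_linear_diff:
  assumes L: "K_linear n m L" and v: "v \<in> carrier_vec n" and w: "w \<in> carrier_vec n"
  shows "L (v - w) = L v - L w"
proof -
  have "v - w = v + (- 1) \<cdot>\<^sub>v w" using v w by (intro eq_vecI) auto
  then have "L (v - w) = L v + (- 1) \<cdot>\<^sub>v L w"
    using L v w K_uminus[OF one_in_K] unfolding K_linear_def by auto
  also have "\<dots> = L v - L w" using L v w unfolding K_linear_def by (intro eq_vecI) auto
  finally show ?thesis .
qed

lemma K_linear_mult_mat_vec: "M \<in> carrier_mat m n \<Longrightarrow> K_linear n m (\<lambda>v. M *\<^sub>v v)"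
  unfolding K_linear_def by (auto simp: mult_add_distrib_mat_vec mult_mat_vec_smult_K)

lemma K_linear_image_K_span:
  assumes L: "K_linear n m L" and fs: "set fs \<subseteq> carrier_vec n"
  shows "L ` K_span n fs = K_span m (map L fs)"
  using fs
proof (induction fs)
  case Nil then show ?case using K_linear_zero[OF L] by simp
next
  case (Cons f fs)
  have fs: "set fs \<subseteq> carrier_vec n" and f: "f \<in> carrier_vec n" using Cons.prems by auto
  have L_comb: "L (x \<cdot>\<^sub>v f + y) = x \<cdot>\<^sub>v L f + L y" if "x \<in> K" "y \<in> K_span n fs" for x y
    using L that f K_span_carrier[OF fs] unfolding K_linear_def by auto
  show ?case
  proof (intro equalityI subsetI)
    fix w assume "w \<in> L ` K_span n (f # fs)"
    then obtain x y where w: "x \<in> K" "y \<in> K_span n fs" "w = L (x \<cdot>\<^sub>v f + y)" by auto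
    have "L y \<in> K_span m (map L fs)" using w(2) Cons.IH[OF fs] by blast
    then have "x \<cdot>\<^sub>v L f + L y \<in> K_span m (L f # map L fs)" using w(1) by (rule K_span_ConsI[rotated])
    then show "w \<in> K_span m (map L (f # fs))" using w L_comb by simp
  next
    fix w assume "w \<in> K_span m (map L (f # fs))"
    then obtain x y' where w: "x \<in> K" "y' \<in> K_span m (map L fs)" "w = x \<cdot>\<^sub>v L f + y'" by auto
    then obtain y where y: "y \<in> K_span n fs" "y' = L y" using Cons.IH[OF fs] by auto
    then have "w = L (x \<cdot>\<^sub>v f + y)" using w L_comb by simp
    then show "w \<in> L ` K_span n (f # fs)" using w(1) y(1) by auto
  qed
qed

lemma K_span_Cons_image_projection:
  assumes P: "K_linear n n P" "P f = 0\<^sub>v n" and f: "f \<in> carrier_vec n" and fs: "set fs \<subseteq> carrier_vec n"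
  shows "P ` K_span n (f # fs) = K_span n (map P fs)"
proof -
  have PK: "P (x \<cdot>\<^sub>v f + y) = P y" if "x \<in> K" "y \<in> carrier_vec n" for x y
  proof -
    have "P (x \<cdot>\<^sub>v f + y) = x \<cdot>\<^sub>v P f + P y" using P(1) that f unfolding K_linear_def by simp
    also have "\<dots> = P y" using P(1,2) that unfolding K_linear_def by (intro eq_vecI) auto
    finally show ?thesis .
  qed
  have "P ` K_span n (f # fs) = P ` K_span n fs"
  proof (intro equalityI subsetI)
    fix w assume "w \<in> P ` K_span n (f # fs)"
    then obtain x y where xy: "x \<in> K" "y \<in> K_span n fs" "w = P (x \<cdot>\<^sub>v f + y)" by auto
    then have "w = P y" using PK K_span_carrier[OF fs] by auto
    then show "w \<in> P ` K_span n fs" using xy(2) by simp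
  next
    fix w assume "w \<in> P ` K_span n fs"
    then show "w \<in> P ` K_span n (f # fs)" using K_span_Cons_mono[of f fs n] f fs by auto
  qed
  then show ?thesis using K_linear_image_K_span[OF P(1) fs] by simp
qed

lemma K_span_Cons_projection_notin:
  assumes P: "K_linear n n P" "\<And>v. v \<in> carrier_vec n \<Longrightarrow> \<exists>x\<in>K. v = x \<cdot>\<^sub>v f + P v"
    and f: "f \<in> carrier_vec n" and fs: "set fs \<subseteq> carrier_vec n"
    and g: "g \<in> carrier_vec n" "g \<notin> K_span n (f # fs)"
  shows "P g \<notin> K_span n (map P fs)"
proof
  assume "P g \<in> K_span n (map P fs)"
  then obtain y where y: "y \<in> K_span n fs" "P g = P y"
    using K_linear_image_K_span[OF P(1) fs] by (metis imageE)
  have yc: "y \<in> carrier_vec n" using y K_span_carrier[OF fs] by auto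
  obtain x where x: "x \<in> K" "g = x \<cdot>\<^sub>v f + P g" using P(2)[OF g(1)] by blast
  obtain x' where x': "x' \<in> K" "y = x' \<cdot>\<^sub>v f + P y" using P(2)[OF yc] by blast
  have Py: "P y \<in> carrier_vec n" using P(1) yc unfolding K_linear_def by auto
  have "g = x \<cdot>\<^sub>v f + P y" using x(2) y(2) by simp
  also have "\<dots> = (x - x') \<cdot>\<^sub>v f + (x' \<cdot>\<^sub>v f + P y)"
    using f Py by (intro eq_vecI) (auto simp: algebra_simps)
  also have "x' \<cdot>\<^sub>v f + P y = y" by (rule x'(2)[symmetric])
  finally have "g = (x - x') \<cdot>\<^sub>v f + y" .
  then have "g \<in> K_span n (f # fs)" using K_diff x x' y(1) K_span_ConsI by metis
  then show False using g(2) by simp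
qed

end

context K_basis
begin

text \<open>P v = v - (\<mu> v / \<mu> f) f for a coordinate functional \<mu> with \<mu> f \<noteq> 0; P = id if f = 0.\<close>
lemma obtain_projection_along:
  assumes f: "f \<in> carrier_vec n"
  obtains P C where "K_linear n n P" "P f = 0\<^sub>v n" "C > 0"
    "\<And>v. v \<in> carrier_vec n \<Longrightarrow> vnorm (P v) \<le> C * vnorm v"
    "\<And>v. v \<in> carrier_vec n \<Longrightarrow> \<exists>x\<in>K. v = x \<cdot>\<^sub>v f + P v"
proof (cases "f = 0\<^sub>v n")
  case True
  have "K_linear n n id" unfolding K_linear_def by simp
  moreover have "v = 0 \<cdot>\<^sub>v f + id v" if "v \<in> carrier_vec n" for v
    using that True by (intro eq_vecI) auto
  ultimately show thesis using that[of id 1] True zero_in_K by fastforce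
next
  case False
  then obtain i where i: "i < n" "f $ i \<noteq> 0" using f by (metis eq_vecI carrier_vecD index_zero_vec)
  then obtain s where s: "s \<in> S" "coord (f $ i) s \<noteq> 0"
    using sum_coord[of "f $ i"] by (metis (no_types, lifting) sum.neutral mult_zero_left)
  define \<mu> where "\<mu> v = coord (v $ i) s" for v
  define l where "l = \<mu> f"
  have lK: "l \<in> K" "l \<noteq> 0" and \<mu>K: "\<mu> v \<in> K" for v
    unfolding l_def \<mu>_def using s coord_in_K by auto
  have \<mu>_le: "av (\<mu> v) \<le> vnorm v" if "v \<in> carrier_vec n" for v
    unfolding \<mu>_def using that i s av_coord_le_dnorm[of s "v $ i"] dnorm_le_vnorm[of i v] by simp
  define P where "P v = v - (\<mu> v * inverse l) \<cdot>\<^sub>v f" for v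
  have "K_linear n n P" unfolding K_linear_def P_def \<mu>_def using f i s
    by (auto intro!: eq_vecI simp: coord_add coord_smult algebra_simps)
  moreover have "P f = 0\<^sub>v n" unfolding P_def using f lK unfolding l_def[symmetric]
    by (intro eq_vecI) auto
  moreover have "vnorm (P v) \<le> (1 + vnorm f / av l) * vnorm v" if v: "v \<in> carrier_vec n" for v
  proof -
    have "vnorm (P v) \<le> vnorm v + vnorm ((\<mu> v * inverse l) \<cdot>\<^sub>v f)"
      unfolding P_def using v f by (intro vnorm_diff_le) auto
    also have "vnorm ((\<mu> v * inverse l) \<cdot>\<^sub>v f) = av (\<mu> v) * (1 / av l) * vnorm f"
      using lK \<mu>K by (simp add: vnorm_smult K_mult K_inverse av_mult av_inverse)
    also have "\<dots> \<le> vnorm v * (1 / av l) * vnorm f"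
      using \<mu>_le[OF v] av_pos[OF lK] vnorm_nonneg[of f] by (intro mult_right_mono) auto
    finally show ?thesis by (simp add: algebra_simps)
  qed
  moreover have "1 + vnorm f / av l > 0" using av_pos[OF lK] vnorm_nonneg[of f] by (simp add: add_pos_nonneg)
  moreover have "v = (\<mu> v * inverse l) \<cdot>\<^sub>v f + P v" if "v \<in> carrier_vec n" for v
    unfolding P_def using that f by (intro eq_vecI) auto
  ultimately show thesis using that \<mu>K lK K_mult K_inverse by blast
qed

text \<open>Induction on the list, projecting along its head; no completeness of K is needed.\<close>
lemma K_span_dist_pos:
  "set fs \<subseteq> carrier_vec n \<Longrightarrow> g \<in> carrier_vec n \<Longrightarrow> g \<notin> K_span n fs \<Longrightarrow>
   \<exists>c>0. \<forall>z\<in>K_span n fs. c \<le> vnorm (g - z)"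
proof (induction "length fs" arbitrary: fs g)
  case 0
  then have "g \<noteq> 0\<^sub>v n" "g - 0\<^sub>v n = g" by (auto intro!: eq_vecI)
  then show ?case using vnorm_pos[OF "0.prems"(2)] "0.hyps" by auto
next
  case (Suc N)
  then obtain f fs' where fs: "fs = f # fs'" by (cases fs) auto
  have f: "f \<in> carrier_vec n" and fs': "set fs' \<subseteq> carrier_vec n" using Suc.prems fs by auto
  obtain P C where P: "K_linear n n P" "P f = 0\<^sub>v n" "C > 0"
    "\<And>v. v \<in> carrier_vec n \<Longrightarrow> vnorm (P v) \<le> C * vnorm v"
    "\<And>v. v \<in> carrier_vec n \<Longrightarrow> \<exists>x\<in>K. v = x \<cdot>\<^sub>v f + P v"
    using obtain_projection_along[OF f] by blast
  have Pg: "P g \<in> carrier_vec n" and Pfs': "set (map P fs') \<subseteq> carrier_vec n"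
    using P(1) fs' Suc.prems(2) unfolding K_linear_def by auto
  have "P g \<notin> K_span n (map P fs')"
    using K_span_Cons_projection_notin[OF P(1,5) f fs' Suc.prems(2)] Suc.prems(3) fs by simp
  moreover have "N = length (map P fs')" using Suc.hyps(2) fs by simp
  ultimately obtain c where c: "c > 0" "\<forall>z'\<in>K_span n (map P fs'). c \<le> vnorm (P g - z')"
    using Suc.hyps(1)[OF _ Pfs' Pg] by blast
  have "c / C \<le> vnorm (g - z)" if z: "z \<in> K_span n fs" for z
  proof -
    have zc: "z \<in> carrier_vec n" using z K_span_carrier[OF Suc.prems(1)] by auto
    have "c \<le> vnorm (P g - P z)"
      using c K_span_Cons_image_projection[OF P(1,2) f fs'] z fs by blast
    also have "P g - P z = P (g - z)" using K_linear_diff[OF P(1) Suc.prems(2) zc] by simp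
    also have "vnorm (P (g - z)) \<le> C * vnorm (g - z)" using P(4) Suc.prems(2) zc by simp
    finally show ?thesis using P(3) by (simp add: field_simps)
  qed
  then show ?case using c P(3) by (intro exI[of _ "c / C"]) auto
qed

lemma K_span_coefficient_bound:
  assumes fs: "set fs \<subseteq> carrier_vec n" and g: "g \<in> carrier_vec n" "g \<notin> K_span n fs"
  shows "\<exists>c>0. \<forall>x\<in>K. \<forall>y\<in>K_span n fs. av x * c \<le> vnorm (x \<cdot>\<^sub>v g + y)"
proof -
  obtain c where c: "c > 0" "\<forall>z\<in>K_span n fs. c \<le> vnorm (g - z)"
    using K_span_dist_pos[OF fs g] by blast
  have "av x * c \<le> vnorm (x \<cdot>\<^sub>v g + y)" if x: "x \<in> K" and y: "y \<in> K_span n fs" for x y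
  proof (cases "x = 0")
    case True
    then show ?thesis using av_eq_0_iff[OF zero_in_K] vnorm_nonneg by simp
  next
    case False
    define z where "z = (- inverse x) \<cdot>\<^sub>v y"
    have z: "z \<in> K_span n fs" unfolding z_def using K_span_smult[OF fs] K_uminus K_inverse x y by blast
    have "x \<cdot>\<^sub>v g + y = x \<cdot>\<^sub>v (g - z)" unfolding z_def using g y K_span_carrier[OF fs] False
      by (intro eq_vecI) (auto simp: algebra_simps mult.assoc[symmetric])
    then have "vnorm (x \<cdot>\<^sub>v g + y) = av x * vnorm (g - z)" using vnorm_smult x by simp
    then show ?thesis using c z av_nonneg[OF x] by (simp add: mult_left_mono)
  qed
  then show ?thesis using c by blast
qed

lemma kernel_bound_Cons_dependent:
  assumes R: "R \<in> carrier_mat m n" and Q: "Q \<in> carrier_mat p n" and fs: "set (f # fs) \<subseteq> carrier_vec n"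
    and ker: "\<forall>x\<in>K_span n (f # fs). R *\<^sub>v x = 0\<^sub>v m \<longrightarrow> Q *\<^sub>v x = 0\<^sub>v p"
    and c: "\<forall>x\<in>K_span n fs. vnorm (Q *\<^sub>v x) \<le> c * vnorm (R *\<^sub>v x)"
    and dep: "R *\<^sub>v f \<in> K_span m (map (\<lambda>v. R *\<^sub>v v) fs)"
  shows "\<forall>x\<in>K_span n (f # fs). vnorm (Q *\<^sub>v x) \<le> c * vnorm (R *\<^sub>v x)"
proof
  have f: "f \<in> carrier_vec n" and fs': "set fs \<subseteq> carrier_vec n" using fs by auto
  obtain y where y: "y \<in> K_span n fs" "R *\<^sub>v f = R *\<^sub>v y"
    using dep K_linear_image_K_span[OF K_linear_mult_mat_vec[OF R] fs'] by (metis imageE)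
  have yc: "y \<in> carrier_vec n" using y K_span_carrier[OF fs'] by auto
  have "f - y \<in> K_span n (f # fs)"
    using K_span_diff[OF fs in_K_span[OF fs] K_span_Cons_mono[OF fs y(1)]] by simp
  moreover have "R *\<^sub>v (f - y) = 0\<^sub>v m" using K_linear_diff[OF K_linear_mult_mat_vec[OF R] f yc] y(2) R by auto
  ultimately have "Q *\<^sub>v (f - y) = 0\<^sub>v p" using ker by blast
  then have "Q *\<^sub>v f - Q *\<^sub>v y = 0\<^sub>v p" using K_linear_diff[OF K_linear_mult_mat_vec[OF Q] f yc] by simp
  moreover have "Q *\<^sub>v f = (Q *\<^sub>v f - Q *\<^sub>v y) + Q *\<^sub>v y" using Q f yc by (intro eq_vecI) auto
  ultimately have Qf: "Q *\<^sub>v f = Q *\<^sub>v y" using Q yc by simp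
  fix x assume "x \<in> K_span n (f # fs)"
  then obtain a y' where x: "x = a \<cdot>\<^sub>v f + y'" "a \<in> K" "y' \<in> K_span n fs" by auto
  have y'c: "y' \<in> carrier_vec n" using x K_span_carrier[OF fs'] by auto
  have "M *\<^sub>v x = M *\<^sub>v (a \<cdot>\<^sub>v y + y')" if "M \<in> carrier_mat k n" "M *\<^sub>v f = M *\<^sub>v y" for M k
    using that x f yc y'c by (simp add: mult_add_distrib_mat_vec mult_mat_vec_smult_K)
  moreover have "a \<cdot>\<^sub>v y + y' \<in> K_span n fs" using K_span_add[OF fs' K_span_smult[OF fs' x(2) y(1)] x(3)] .
  ultimately show "vnorm (Q *\<^sub>v x) \<le> c * vnorm (R *\<^sub>v x)" using c R Q y(2) Qf by metis
qed

lemma kernel_bound_Cons_independent: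
  assumes R: "R \<in> carrier_mat m n" and Q: "Q \<in> carrier_mat p n" and fs: "set (f # fs) \<subseteq> carrier_vec n"
    and c: "c \<ge> 0" "\<forall>x\<in>K_span n fs. vnorm (Q *\<^sub>v x) \<le> c * vnorm (R *\<^sub>v x)"
    and indep: "R *\<^sub>v f \<notin> K_span m (map (\<lambda>v. R *\<^sub>v v) fs)"
  shows "\<exists>c'\<ge>0. \<forall>x\<in>K_span n (f # fs). vnorm (Q *\<^sub>v x) \<le> c' * vnorm (R *\<^sub>v x)"
proof -
  have f: "f \<in> carrier_vec n" and fs': "set fs \<subseteq> carrier_vec n" using fs by auto
  have Rfs: "set (map (\<lambda>v. R *\<^sub>v v) fs) \<subseteq> carrier_vec m" using fs' R by auto
  obtain c1 where c1: "c1 > 0"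
    "\<forall>a\<in>K. \<forall>z\<in>K_span m (map (\<lambda>v. R *\<^sub>v v) fs). av a * c1 \<le> vnorm (a \<cdot>\<^sub>v (R *\<^sub>v f) + z)"
    using K_span_coefficient_bound[OF Rfs _ indep] R f by auto
  define B where "B = vnorm (Q *\<^sub>v f) + c * vnorm (R *\<^sub>v f)"
  have B: "B \<ge> 0" unfolding B_def using c vnorm_nonneg by auto
  have "vnorm (Q *\<^sub>v x) \<le> (B / c1 + c) * vnorm (R *\<^sub>v x)" if x_span: "x \<in> K_span n (f # fs)" for x
  proof -
    obtain a y where x: "x = a \<cdot>\<^sub>v f + y" "a \<in> K" "y \<in> K_span n fs" using x_span by auto
    have yc: "y \<in> carrier_vec n" using x K_span_carrier[OF fs'] by auto
    have Rx: "R *\<^sub>v x = a \<cdot>\<^sub>v (R *\<^sub>v f) + R *\<^sub>v y" and Qx: "Q *\<^sub>v x = a \<cdot>\<^sub>v (Q *\<^sub>v f) + Q *\<^sub>v y"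
      using R Q x f yc by (simp_all add: mult_add_distrib_mat_vec mult_mat_vec_smult_K)
    have a: "av a * c1 \<le> vnorm (R *\<^sub>v x)"
      unfolding Rx using c1 x K_linear_image_K_span[OF K_linear_mult_mat_vec[OF R] fs'] by blast
    have "R *\<^sub>v y = R *\<^sub>v x - a \<cdot>\<^sub>v (R *\<^sub>v f)" unfolding Rx using R f yc by (intro eq_vecI) auto
    moreover have "R *\<^sub>v x \<in> carrier_vec m" using R by (simp add: carrier_vecI)
    ultimately have "vnorm (R *\<^sub>v y) \<le> vnorm (R *\<^sub>v x) + av a * vnorm (R *\<^sub>v f)"
      using vnorm_diff_le[of "R *\<^sub>v x" m "a \<cdot>\<^sub>v (R *\<^sub>v f)"] vnorm_smult x(2) R f by simp
    moreover have "vnorm (Q *\<^sub>v x) \<le> av a * vnorm (Q *\<^sub>v f) + vnorm (Q *\<^sub>v y)"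
      unfolding Qx using vnorm_add_le[of "a \<cdot>\<^sub>v (Q *\<^sub>v f)" p "Q *\<^sub>v y"] Q f yc vnorm_smult x(2) by simp
    moreover have "vnorm (Q *\<^sub>v y) \<le> c * vnorm (R *\<^sub>v y)" using c x by auto
    ultimately have "vnorm (Q *\<^sub>v x) \<le> av a * B + c * vnorm (R *\<^sub>v x)"
      unfolding B_def using c(1) by (smt (verit, best) mult_left_mono distrib_left mult.left_commute)
    moreover have "av a * B \<le> (vnorm (R *\<^sub>v x) / c1) * B"
      using a c1 B by (intro mult_right_mono) (auto simp: field_simps)
    ultimately show ?thesis by (simp add: algebra_simps)
  qed
  then show ?thesis using B c1 c by (intro exI[of _ "B / c1 + c"]) auto
qed

lemma K_span_kernel_bound:
  assumes R: "R \<in> carrier_mat m n" and Q: "Q \<in> carrier_mat p n"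
  shows "set fs \<subseteq> carrier_vec n \<Longrightarrow> \<forall>x\<in>K_span n fs. R *\<^sub>v x = 0\<^sub>v m \<longrightarrow> Q *\<^sub>v x = 0\<^sub>v p \<Longrightarrow>
    \<exists>c\<ge>0. \<forall>x\<in>K_span n fs. vnorm (Q *\<^sub>v x) \<le> c * vnorm (R *\<^sub>v x)"
proof (induction fs)
  case Nil
  then show ?case using mult_mat_vec_zero[OF Q] by auto
next
  case (Cons f fs)
  obtain c where c: "c \<ge> 0" "\<forall>x\<in>K_span n fs. vnorm (Q *\<^sub>v x) \<le> c * vnorm (R *\<^sub>v x)"
    using Cons.IH Cons.prems K_span_Cons_mono[OF Cons.prems(1)] by auto
  show ?case
    using kernel_bound_Cons_dependent[OF R Q Cons.prems c(2)] kernel_bound_Cons_independent[OF R Q Cons.prems(1) c]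
    by (cases "R *\<^sub>v f \<in> K_span m (map (\<lambda>v. R *\<^sub>v v) fs)") (auto intro: exI[of _ c] c(1))
qed

lemma carrier_vec_K_span: "\<exists>fs. set fs \<subseteq> carrier_vec n \<and> K_span n fs = carrier_vec n"
proof -
  obtain sl where sl: "set sl = S" using finite_list[OF finite_basis] by blast
  define fs where "fs = concat (map (\<lambda>j. map (\<lambda>s. s \<cdot>\<^sub>v unit_vec n j) sl) [0..<n])"
  have fs: "set fs \<subseteq> carrier_vec n" unfolding fs_def by auto
  have "v \<in> K_span n fs" if v: "v \<in> carrier_vec n" for v
  proof -
    define u where "u j s = coord (v $ j) s \<cdot>\<^sub>v (s \<cdot>\<^sub>v unit_vec n j)" for j s
    let ?u = "\<lambda>(j, s). u j s"
    have mem: "s \<cdot>\<^sub>v unit_vec n j \<in> set fs" if "j < n" "s \<in> S" for j s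
      using that sl by (auto simp: fs_def)
    have u_span: "?u (j, s) \<in> K_span n fs" if "j < n" "s \<in> S" for j s
      using K_span_smult[OF fs coord_in_K[OF that(2)] in_K_span[OF fs mem[OF that]]] by (simp add: u_def)
    have fc: "finsum_vec TYPE('d) n ?u ({..<n} \<times> S) \<in> carrier_vec n"
      by (rule finsum_vec_closed) (auto simp: u_def)
    have "finsum_vec TYPE('d) n ?u ({..<n} \<times> S) \<in> K_span n fs"
      using u_span finite_basis by (intro K_span_sum[OF fs]) auto
    also have "finsum_vec TYPE('d) n ?u ({..<n} \<times> S) = v"
    proof (rule eq_vecI)
      fix i assume "i < dim_vec v"
      then have i: "i < n" using v by simp
      have uji: "(\<Sum>s\<in>S. u j s $ i) = (if j = i then v $ i else 0)" for j
        using i sum_coord[of "v $ i", symmetric] by (auto simp: u_def unit_vec_def)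
      have "finsum_vec TYPE('d) n ?u ({..<n} \<times> S) $ i = (\<Sum>p\<in>{..<n} \<times> S. ?u p $ i)"
        using finite_basis i by (intro index_finsum_vec) (auto simp: u_def)
      also have "\<dots> = (\<Sum>j<n. \<Sum>s\<in>S. u j s $ i)"
        unfolding sum.cartesian_product by (intro sum.cong) auto
      also have "\<dots> = v $ i" using i by (simp add: uji)
      finally show "finsum_vec TYPE('d) n ?u ({..<n} \<times> S) $ i = v $ i" .
    qed (use v fc in auto)
    finally show ?thesis .
  qed
  then show ?thesis using fs K_span_carrier[OF fs] by blast
qed

lemma kernel_bound:
  assumes R: "R \<in> carrier_mat m n" and Q: "Q \<in> carrier_mat p n"
    and ker: "\<forall>x\<in>carrier_vec n. R *\<^sub>v x = 0\<^sub>v m \<longrightarrow> Q *\<^sub>v x = 0\<^sub>v p"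
  shows "\<exists>c\<ge>0. \<forall>x\<in>carrier_vec n. vnorm (Q *\<^sub>v x) \<le> c * vnorm (R *\<^sub>v x)"
proof -
  obtain fs where fs: "set fs \<subseteq> carrier_vec n" "K_span n fs = carrier_vec n"
    using carrier_vec_K_span by blast
  show ?thesis using K_span_kernel_bound[OF R Q fs(1)] ker unfolding fs(2) by blast
qed

end

section \<open>Amalgamated products of matrix groups\<close>

lemma equivclp_map:
  assumes "\<And>x y. r x y \<Longrightarrow> r' (f x) (f y)" and "equivclp r a b"
  shows "equivclp r' (f a) (f b)"
  using assms(2)
proof (induction rule: equivclp_induct)
  case (step y z)
  then show ?case using assms(1) equivclp_into_equivclp by metis
qed simp

lemma amalg_step_append_context:
  "amalg_step n A C B u v \<Longrightarrow> amalg_step n A C B (p @ u @ s) (p @ v @ s)"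
proof (induction rule: amalg_step.induct)
  case (mulA x y u v) then show ?case using amalg_step.mulA[of x A y n C B "p @ u" "v @ s"] by simp
next
  case (mulB x y u v) then show ?case using amalg_step.mulB[of x B y n A C "p @ u" "v @ s"] by simp
next
  case (oneA u v) then show ?case using amalg_step.oneA[of n A C B "p @ u" "v @ s"] by simp
next
  case (oneB u v) then show ?case using amalg_step.oneB[of n A C B "p @ u" "v @ s"] by simp
next
  case (amal c u v) then show ?case using amalg_step.amal[of c C n A B "p @ u" "v @ s"] by simp
qed

lemma amalg_eq_append_context:
  "amalg_eq n A C B u v \<Longrightarrow> amalg_eq n A C B (p @ u @ s) (p @ v @ s)"
  unfolding amalg_eq_def
  by (rule equivclp_map[where f = "\<lambda>u. p @ u @ s"]) (auto intro: amalg_step_append_context)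

lemma amalg_eq_refl: "amalg_eq n A C B u u"
  and amalg_eq_sym: "amalg_eq n A C B u v \<Longrightarrow> amalg_eq n A C B v u"
  and amalg_eq_trans[trans]: "amalg_eq n A C B u v \<Longrightarrow> amalg_eq n A C B v w \<Longrightarrow> amalg_eq n A C B u w"
  unfolding amalg_eq_def by (auto intro: equivclp_sym equivclp_trans)

lemma amalg_step_imp_eq: "amalg_step n A C B u v \<Longrightarrow> amalg_eq n A C B u v"
  unfolding amalg_eq_def by blast

lemma amalg_words_Cons:
  "x # w \<in> amalg_words A B \<longleftrightarrow> (case x of Inl a \<Rightarrow> a \<in> A | Inr b \<Rightarrow> b \<in> B) \<and> w \<in> amalg_words A B"
  and amalg_words_append: "u @ w \<in> amalg_words A B \<longleftrightarrow> u \<in> amalg_words A B \<and> w \<in> amalg_words A B"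
  and amalg_words_Nil[simp]: "[] \<in> amalg_words A B"
  unfolding amalg_words_def by auto

lemma eval_word_Nil[simp]: "eval_word n [] = 1\<^sub>m n"
  and eval_word_Cons: "eval_word n (x # w) = case_sum id id x * eval_word n w"
  unfolding eval_word_def by simp_all

lemma eval_word_carrier:
  "A \<subseteq> carrier_mat n n \<Longrightarrow> B \<subseteq> carrier_mat n n \<Longrightarrow> w \<in> amalg_words A B \<Longrightarrow>
   eval_word n w \<in> carrier_mat n n"
proof (induction w)
  case (Cons x w)
  then show ?case by (cases x) (auto simp: eval_word_Cons amalg_words_Cons)
qed simp

lemma eval_word_append:
  assumes "A \<subseteq> carrier_mat n n" "B \<subseteq> carrier_mat n n"
  shows "u \<in> amalg_words A B \<Longrightarrow> w \<in> amalg_words A B \<Longrightarrow>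
    eval_word n (u @ w) = eval_word n u * eval_word n w"
proof (induction u)
  case Nil
  then show ?case using eval_word_carrier[OF assms Nil(2)] by simp
next
  case (Cons x u)
  have x: "case_sum id id x \<in> carrier_mat n n"
    using Cons.prems assms by (cases x) (auto simp: amalg_words_Cons)
  have "eval_word n u \<in> carrier_mat n n" "eval_word n w \<in> carrier_mat n n"
    using eval_word_carrier[OF assms] Cons.prems by (auto simp: amalg_words_Cons)
  then show ?case using Cons x by (simp add: eval_word_Cons amalg_words_Cons assoc_mult_mat)
qed

definition side :: "bool \<Rightarrow> 'a \<Rightarrow> 'a + 'a" where
  "side b g = (if b then Inl g else Inr g)"

lemma side_simps[simp]: "side True g = Inl g" "side False g = Inr g" "isl (side b g) = b"
  "case_sum id id (side b g) = g"
  by (simp_all add: side_def)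

lemma obtain_side: obtains b g where "x = side b g"
  by (cases x) (metis side_simps(1), metis side_simps(2))

definition reduced_word :: "'a::division_ring mat set \<Rightarrow> 'a mat set \<Rightarrow> 'a mat set \<Rightarrow> ('a mat + 'a mat) list \<Rightarrow> bool"
  where "reduced_word A C B w \<longleftrightarrow>
    w \<in> amalg_words (A - C) (B - C) \<and> successively (\<lambda>x y. isl x \<noteq> isl y) w"

lemma reduced_word_Nil[simp]: "reduced_word A C B []"
  unfolding reduced_word_def by simp

lemma reduced_word_Cons: "reduced_word A C B (x # r) \<longleftrightarrow>
    [x] \<in> amalg_words (A - C) (B - C) \<and> reduced_word A C B r \<and> (r \<noteq> [] \<longrightarrow> isl x \<noteq> isl (hd r))"
  unfolding reduced_word_def by (cases r) (auto simp: amalg_words_Cons)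

lemma reduced_word_snoc: "reduced_word A C B (ws @ [z]) \<longleftrightarrow>
    [z] \<in> amalg_words (A - C) (B - C) \<and> reduced_word A C B ws \<and> (ws \<noteq> [] \<longrightarrow> isl (last ws) \<noteq> isl z)"
  unfolding reduced_word_def by (auto simp: successively_append_iff amalg_words_append)

lemma reduced_word_words: "reduced_word A C B w \<Longrightarrow> w \<in> amalg_words A B"
  unfolding reduced_word_def amalg_words_def by (auto split: sum.splits)

definition GL_inv :: "nat \<Rightarrow> 'a::division_ring mat set \<Rightarrow> 'a mat \<Rightarrow> 'a mat" where
  "GL_inv n G g = (SOME g'. g' \<in> G \<and> g * g' = 1\<^sub>m n \<and> g' * g = 1\<^sub>m n)"

lemma GL_inv: "subgroup_GL n G \<Longrightarrow> g \<in> G \<Longrightarrow>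
    GL_inv n G g \<in> G \<and> g * GL_inv n G g = 1\<^sub>m n \<and> GL_inv n G g * g = 1\<^sub>m n"
  unfolding GL_inv_def subgroup_GL_def by (rule someI_ex) blast

lemma subgroup_GL_carrier: "subgroup_GL n G \<Longrightarrow> G \<subseteq> carrier_mat n n"
  and subgroup_GL_one: "subgroup_GL n G \<Longrightarrow> 1\<^sub>m n \<in> G"
  and subgroup_GL_mult: "subgroup_GL n G \<Longrightarrow> g \<in> G \<Longrightarrow> h \<in> G \<Longrightarrow> g * h \<in> G"
  unfolding subgroup_GL_def GL_mat_def by auto

lemma finite_subgroup_GL_imp_subgroup_GL: "finite_subgroup_GL n G \<Longrightarrow> subgroup_GL n G"
  unfolding finite_subgroup_GL_def subgroup_GL_def by auto

lemma mat_inverse_unique: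
  fixes g :: "'a::division_ring mat"
  assumes "g \<in> carrier_mat n n" "a \<in> carrier_mat n n" "b \<in> carrier_mat n n"
    and "a * g = 1\<^sub>m n" "g * b = 1\<^sub>m n"
  shows "a = b"
proof -
  have "a = a * (g * b)" using assms by simp
  also have "\<dots> = (a * g) * b" using assms(1-3) by (simp add: assoc_mult_mat)
  also have "\<dots> = b" using assms by simp
  finally show ?thesis .
qed

lemma subgroup_GL_cancel_left:
  assumes G: "subgroup_GL n G" and a: "a \<in> carrier_mat n n" and g: "g \<in> G" and ga: "g * a \<in> G"
  shows "a \<in> G"
proof -
  have gi: "GL_inv n G g \<in> G" "GL_inv n G g * g = 1\<^sub>m n" using GL_inv[OF G g] by auto
  have "g \<in> carrier_mat n n" "GL_inv n G g \<in> carrier_mat n n" using subgroup_GL_carrier[OF G] g gi by auto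
  then have "GL_inv n G g * (g * a) = a" using gi a by (simp add: assoc_mult_mat[symmetric])
  then show ?thesis using subgroup_GL_mult[OF G gi(1) ga] by simp
qed

lemma subgroup_GL_Int:
  assumes "subgroup_GL n A" "subgroup_GL n H"
  shows "subgroup_GL n (A \<inter> H)"
  unfolding subgroup_GL_def
proof (intro conjI ballI)
  show "A \<inter> H \<subseteq> GL_mat n" "1\<^sub>m n \<in> A \<inter> H"
    using assms unfolding subgroup_GL_def by auto
  fix g h assume g: "g \<in> A \<inter> H"
  then have gA: "g \<in> A" and gH: "g \<in> H" by auto
  note invA = GL_inv[OF assms(1) gA] and invH = GL_inv[OF assms(2) gH]
  have "g \<in> carrier_mat n n" "GL_inv n A g \<in> carrier_mat n n" "GL_inv n H g \<in> carrier_mat n n"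
    using subgroup_GL_carrier[OF assms(1)] subgroup_GL_carrier[OF assms(2)] gA invA invH by auto
  then have "GL_inv n A g = GL_inv n H g" using mat_inverse_unique invA invH by blast
  then have "GL_inv n A g \<in> A \<inter> H" using invA invH by auto
  then show "\<exists>g'\<in>A \<inter> H. g * g' = 1\<^sub>m n \<and> g' * g = 1\<^sub>m n" using invA by blast
  assume "h \<in> A \<inter> H"
  then show "g * h \<in> A \<inter> H" using g subgroup_GL_mult[OF assms(1)] subgroup_GL_mult[OF assms(2)] by auto
qed

lemma obtain_third_coset:
  fixes G C :: "'a::division_ring mat set"
  assumes G: "subgroup_GL n G" and C: "subgroup_GL n C" and CG: "C \<subseteq> G"
    and index: "sub_index G C > 2" and x: "x \<in> G"
  obtains a where "a \<in> G" "a \<notin> C" "\<forall>c\<in>C. a \<noteq> x * c"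
proof -
  define L where "L g = (\<lambda>c. g * c) ` C" for g
  have Gc: "G \<subseteq> carrier_mat n n" and Cc: "C \<subseteq> carrier_mat n n"
    using subgroup_GL_carrier G C by auto
  have LC: "L c = C" if c: "c \<in> C" for c
  proof
    show "L c \<subseteq> C" unfolding L_def using subgroup_GL_mult[OF C c] by auto
    show "C \<subseteq> L c"
    proof
      fix c' assume c': "c' \<in> C"
      have ci: "GL_inv n C c \<in> C" "c * GL_inv n C c = 1\<^sub>m n" using GL_inv[OF C c] by auto
      have "c \<in> carrier_mat n n" "GL_inv n C c \<in> carrier_mat n n" "c' \<in> carrier_mat n n"
        using Cc c c' ci by auto
      then have "c' = c * (GL_inv n C c * c')" using ci by (simp add: assoc_mult_mat[symmetric])
      then show "c' \<in> L c" unfolding L_def using subgroup_GL_mult[OF C] GL_inv[OF C c] c' by blast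
    qed
  qed
  have Lxc: "L (x * c) = L x" if c: "c \<in> C" for c
  proof -
    have "L (x * c) = (\<lambda>c'. x * c') ` L c" unfolding L_def image_image
      using x c Gc Cc by (intro image_cong refl assoc_mult_mat) auto
    then show ?thesis using LC[OF c] unfolding L_def by simp
  qed
  have "\<not> L ` G \<subseteq> {C, L x}"
  proof
    assume "L ` G \<subseteq> {C, L x}"
    then have "card (L ` G) \<le> card {C, L x}" by (intro card_mono) auto
    also have "\<dots> \<le> 2" by (simp add: card_insert_if)
    finally have "card (L ` G) \<le> 2" .
    then show False using index unfolding sub_index_def L_def by simp
  qed
  then obtain a where "a \<in> G" "L a \<noteq> C" "L a \<noteq> L x" by blast
  then show thesis using that LC Lxc by blast
qed

locale amalgam =
  fixes n :: nat and A C B :: "'a::division_ring mat set"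
  assumes subgroup_A: "subgroup_GL n A" and subgroup_B: "subgroup_GL n B"
    and subgroup_C: "subgroup_GL n C" and C_A: "C \<subseteq> A" and C_B: "C \<subseteq> B"
begin

abbreviation amalg_equiv (infix "\<sim>" 50) where "u \<sim> v \<equiv> amalg_eq n A C B u v"

definition factor :: "bool \<Rightarrow> 'a mat set" where "factor b = (if b then A else B)"

lemma factor_simps[simp]: "factor True = A" "factor False = B"
  by (simp_all add: factor_def)

lemma subgroup_factor: "subgroup_GL n (factor b)"
  and C_factor: "C \<subseteq> factor b"
  using subgroup_A subgroup_B C_A C_B by (simp_all add: factor_def)

lemma factor_carrier: "factor b \<subseteq> carrier_mat n n"
  using subgroup_GL_carrier[OF subgroup_factor] .

lemma C_carrier: "C \<subseteq> carrier_mat n n"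
  using subgroup_GL_carrier[OF subgroup_C] .

lemma side_in_words: "[side b g] \<in> amalg_words A B \<longleftrightarrow> g \<in> factor b"
  by (cases b) (auto simp: amalg_words_Cons)

lemma letter_in_words: "[x] \<in> amalg_words A B \<longleftrightarrow> case_sum id id x \<in> factor (isl x)"
  by (cases x) (auto simp: amalg_words_Cons)

lemma reduced_side_Cons: "reduced_word A C B (side b g # r) \<longleftrightarrow>
    g \<in> factor b - C \<and> reduced_word A C B r \<and> (r \<noteq> [] \<longrightarrow> isl (hd r) \<noteq> b)"
  by (cases b) (auto simp: reduced_word_Cons amalg_words_Cons)

lemma side_mult_equiv: "g \<in> factor b \<Longrightarrow> h \<in> factor b \<Longrightarrow> side b g # side b h # v \<sim> side b (g * h) # v"
  using amalg_step.mulA[of g A h n C B "[]" v] amalg_step.mulB[of g B h n A C "[]" v]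
  by (cases b) (auto intro: amalg_step_imp_eq)

lemma side_switch_equiv: "c \<in> C \<Longrightarrow> side b c # v \<sim> side b' c # v"
  using amalg_step_imp_eq[OF amalg_step.amal[of c C n A B "[]" v]]
  by (cases b; cases b') (auto intro: amalg_eq_refl amalg_eq_sym)

lemma side_one_equiv: "side b (1\<^sub>m n) # v \<sim> v"
  using amalg_step.oneA[of n A C B "[]" v] amalg_step.oneB[of n A C B "[]" v]
  by (cases b) (auto intro: amalg_step_imp_eq)

lemma C_mult_notin: "c \<in> C \<Longrightarrow> g \<in> factor b \<Longrightarrow> g \<notin> C \<Longrightarrow> c * g \<notin> C"
  using subgroup_GL_cancel_left[OF subgroup_C] factor_carrier by blast

definition normal_form :: "('a mat + 'a mat) list \<Rightarrow> bool" where
  "normal_form w \<longleftrightarrow> (\<exists>c\<in>C. w = [Inl c]) \<or> reduced_word A C B w"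

lemma single_letter_normal_form:
  assumes "g \<in> factor b" shows "\<exists>w. [side b g] \<sim> w \<and> normal_form w"
proof (cases "g \<in> C")
  case True
  then have "[side b g] \<sim> [Inl g]" using side_switch_equiv[of g b "[]" True] by simp
  then show ?thesis unfolding normal_form_def using True by blast
next
  case False
  then have "reduced_word A C B [side b g]" using assms by (simp add: reduced_side_Cons)
  then show ?thesis unfolding normal_form_def using amalg_eq_refl by blast
qed

lemma C_Cons_reduced:
  assumes c: "c \<in> C" and r: "reduced_word A C B (side b' g # r)"
  shows "side b c # side b' g # r \<sim> side b' (c * g) # r \<and> reduced_word A C B (side b' (c * g) # r)"
proof -
  have g: "g \<in> factor b'" "g \<notin> C" using r by (auto simp: reduced_side_Cons)
  have "side b c # side b' g # r \<sim> side b' c # side b' g # r" using side_switch_equiv[OF c] .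
  also have "\<dots> \<sim> side b' (c * g) # r" using side_mult_equiv C_factor c g(1) by blast
  finally have "side b c # side b' g # r \<sim> side b' (c * g) # r" .
  moreover have "c * g \<in> factor b' - C"
    using subgroup_GL_mult[OF subgroup_factor] C_factor c g C_mult_notin by blast
  ultimately show ?thesis using r by (simp add: reduced_side_Cons)
qed

lemma side_Cons_reduced_normal_form:
  assumes g: "g \<in> factor b" and r: "reduced_word A C B r" "r \<noteq> [] \<longrightarrow> isl (hd r) \<noteq> b"
  shows "\<exists>w. side b g # r \<sim> w \<and> normal_form w"
proof (cases "g \<in> C")
  case False
  then have "reduced_word A C B (side b g # r)" using g r by (simp add: reduced_side_Cons)
  then show ?thesis using amalg_eq_refl unfolding normal_form_def by blast
next
  case True
  show ?thesis
  proof (cases r)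
    case Nil
    then show ?thesis using single_letter_normal_form[OF g] by simp
  next
    case (Cons z r')
    obtain b' h where z: "z = side b' h" by (rule obtain_side)
    then have "reduced_word A C B (side b' h # r')" using r(1) Cons by simp
    from C_Cons_reduced[OF True this, of b] show ?thesis using Cons z unfolding normal_form_def by auto
  qed
qed

lemma normal_form_Cons:
  assumes g: "g \<in> factor b" and w: "normal_form w"
  shows "\<exists>w'. side b g # w \<sim> w' \<and> normal_form w'"
proof -
  have "(\<exists>c\<in>C. w = [Inl c]) \<or> w = [] \<or> (\<exists>b' h r. w = side b' h # r \<and> reduced_word A C B w)"
  proof (cases w)
    case (Cons x r)
    obtain b' h where "x = side b' h" by (rule obtain_side)
    then show ?thesis using w Cons unfolding normal_form_def by blast
  qed simp
  then consider (C) c where "c \<in> C" "w = [Inl c]" | (Nil) "w = []"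
    | (Cons) b' h r where "w = side b' h # r" "reduced_word A C B w"
    by blast
  then show ?thesis
  proof cases
    case (C c)
    then have "side b g # w \<sim> side b g # [side b c]"
      using amalg_eq_append_context[OF side_switch_equiv[OF C(1), of True "[]" b], of "[side b g]" "[]"]
      by simp
    also have "\<dots> \<sim> [side b (g * c)]" using side_mult_equiv g C_factor C(1) by blast
    finally have gc: "side b g # w \<sim> [side b (g * c)]" .
    have "g * c \<in> factor b" using subgroup_GL_mult[OF subgroup_factor g] C_factor C(1) by blast
    then obtain w' where "[side b (g * c)] \<sim> w'" "normal_form w'"
      using side_Cons_reduced_normal_form[of "g * c" b "[]"] by auto
    then show ?thesis using gc amalg_eq_trans by blast
  next
    case Nil
    then show ?thesis using side_Cons_reduced_normal_form[OF g] by simp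
  next
    case (Cons b' h r)
    have h: "h \<in> factor b'" and r: "reduced_word A C B r" "r \<noteq> [] \<longrightarrow> isl (hd r) \<noteq> b'"
      using Cons by (auto simp: reduced_side_Cons)
    show ?thesis
    proof (cases "b' = b")
      case False
      then show ?thesis using side_Cons_reduced_normal_form[OF g] Cons by simp
    next
      case True
      have "side b g # w \<sim> side b (g * h) # r" using Cons True side_mult_equiv g h by simp
      moreover have "g * h \<in> factor b" using subgroup_GL_mult[OF subgroup_factor g] h True by simp
      ultimately show ?thesis using side_Cons_reduced_normal_form r True amalg_eq_trans by blast
    qed
  qed
qed

lemma obtain_normal_form:
  assumes "w \<in> amalg_words A B"
  obtains w' where "w \<sim> w'" "normal_form w'"
  using assms
proof (induction w arbitrary: thesis)
  case Nil
  then show ?case using amalg_eq_refl unfolding normal_form_def by fastforce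
next
  case (Cons x w)
  obtain w' where w': "w \<sim> w'" "normal_form w'" using Cons.IH Cons.prems(2) by (auto simp: amalg_words_Cons)
  have xw: "x # w \<sim> x # w'" using amalg_eq_append_context[OF w'(1), of "[x]" "[]"] by simp
  obtain b g where x: "x = side b g" by (rule obtain_side)
  have "[x] \<in> amalg_words A B" using Cons.prems(2) by (auto simp: amalg_words_Cons)
  then have "g \<in> factor b" using x side_in_words by simp
  then obtain w'' where "x # w' \<sim> w''" "normal_form w''"
    using normal_form_Cons[OF _ w'(2)] x by blast
  then show ?case using Cons.prems(1) xw amalg_eq_trans by blast
qed

lemma eval_word_append_words:
  "u \<in> amalg_words A B \<Longrightarrow> w \<in> amalg_words A B \<Longrightarrow> eval_word n (u @ w) = eval_word n u * eval_word n w"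
  using eval_word_append subgroup_GL_carrier subgroup_A subgroup_B by blast

lemma eval_word_carrier_words: "w \<in> amalg_words A B \<Longrightarrow> eval_word n w \<in> carrier_mat n n"
  using eval_word_carrier subgroup_GL_carrier subgroup_A subgroup_B by blast

lemma eval_word_context:
  assumes "m \<in> amalg_words A B \<longleftrightarrow> m' \<in> amalg_words A B"
    and "m \<in> amalg_words A B \<Longrightarrow> eval_word n m = eval_word n m'"
  shows "(p @ m @ s \<in> amalg_words A B \<longleftrightarrow> p @ m' @ s \<in> amalg_words A B) \<and>
    (p @ m @ s \<in> amalg_words A B \<longrightarrow> eval_word n (p @ m @ s) = eval_word n (p @ m' @ s))"
  using assms eval_word_append_words by (auto simp: amalg_words_append)

lemma amalg_step_eval:
  "amalg_step n A C B u v \<Longrightarrow> (u \<in> amalg_words A B \<longleftrightarrow> v \<in> amalg_words A B) \<and>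
    (u \<in> amalg_words A B \<longrightarrow> eval_word n u = eval_word n v)"
proof (induction rule: amalg_step.induct)
  case (mulA x y u v)
  have "x \<in> carrier_mat n n" "y \<in> carrier_mat n n" "x * y \<in> A"
    using mulA factor_carrier[of True] subgroup_GL_mult[OF subgroup_A] by auto
  then show ?case using mulA
    by (intro eval_word_context) (auto simp: amalg_words_Cons eval_word_Cons assoc_mult_mat)
next
  case (mulB x y u v)
  have "x \<in> carrier_mat n n" "y \<in> carrier_mat n n" "x * y \<in> B"
    using mulB factor_carrier[of False] subgroup_GL_mult[OF subgroup_B] by auto
  then show ?case using mulB
    by (intro eval_word_context) (auto simp: amalg_words_Cons eval_word_Cons assoc_mult_mat)
next
  case (oneA u v)
  have "(u @ [Inl (1\<^sub>m n)] @ v \<in> amalg_words A B \<longleftrightarrow> u @ [] @ v \<in> amalg_words A B) \<and>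
      (u @ [Inl (1\<^sub>m n)] @ v \<in> amalg_words A B \<longrightarrow>
        eval_word n (u @ [Inl (1\<^sub>m n)] @ v) = eval_word n (u @ [] @ v))"
    using subgroup_GL_one[OF subgroup_A]
    by (intro eval_word_context) (auto simp: amalg_words_Cons eval_word_Cons)
  then show ?case by simp
next
  case (oneB u v)
  have "(u @ [Inr (1\<^sub>m n)] @ v \<in> amalg_words A B \<longleftrightarrow> u @ [] @ v \<in> amalg_words A B) \<and>
      (u @ [Inr (1\<^sub>m n)] @ v \<in> amalg_words A B \<longrightarrow>
        eval_word n (u @ [Inr (1\<^sub>m n)] @ v) = eval_word n (u @ [] @ v))"
    using subgroup_GL_one[OF subgroup_B]
    by (intro eval_word_context) (auto simp: amalg_words_Cons eval_word_Cons)
  then show ?case by simp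
next
  case (amal c u v)
  then show ?case using C_A C_B
    by (intro eval_word_context) (auto simp: amalg_words_Cons eval_word_Cons)
qed

lemma amalg_eq_eval:
  "u \<sim> v \<Longrightarrow> u \<in> amalg_words A B \<Longrightarrow> v \<in> amalg_words A B \<and> eval_word n u = eval_word n v"
  unfolding amalg_eq_def
proof (induction rule: equivclp_induct)
  case (step y z)
  then show ?case using amalg_step_eval by metis
qed simp

definition inv_letter :: "'a mat + 'a mat \<Rightarrow> 'a mat + 'a mat" where
  "inv_letter x = side (isl x) (GL_inv n (factor (isl x)) (case_sum id id x))"

definition inv_word :: "('a mat + 'a mat) list \<Rightarrow> ('a mat + 'a mat) list" where
  "inv_word w = rev (map inv_letter w)"

lemma inv_word_Cons: "inv_word (x # w) = inv_word w @ [inv_letter x]"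
  unfolding inv_word_def by simp

lemma inv_letter:
  assumes "[x] \<in> amalg_words A B"
  shows "[inv_letter x] \<in> amalg_words A B" "inv_letter x # [x] \<sim> []"
    "case_sum id id (inv_letter x) * case_sum id id x = 1\<^sub>m n"
    "case_sum id id x * case_sum id id (inv_letter x) = 1\<^sub>m n"
proof -
  obtain b g where x: "x = side b g" by (rule obtain_side)
  have g: "g \<in> factor b" using assms x side_in_words by blast
  note inv = GL_inv[OF subgroup_factor g]
  have il: "inv_letter (side b g) = side b (GL_inv n (factor b) g)" unfolding inv_letter_def by simp
  show "[inv_letter x] \<in> amalg_words A B"
    "case_sum id id (inv_letter x) * case_sum id id x = 1\<^sub>m n"
    "case_sum id id x * case_sum id id (inv_letter x) = 1\<^sub>m n"
    using inv by (simp_all add: il x side_in_words)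
  have "inv_letter x # [x] \<sim> [side b (GL_inv n (factor b) g * g)]"
    unfolding x il using side_mult_equiv inv g by blast
  also have "\<dots> \<sim> []" using inv side_one_equiv[of b "[]"] by simp
  finally show "inv_letter x # [x] \<sim> []" .
qed

lemma inv_word_words: "w \<in> amalg_words A B \<Longrightarrow> inv_word w \<in> amalg_words A B"
proof (induction w)
  case (Cons x w)
  then show ?case using inv_letter(1)[of x] by (auto simp: inv_word_Cons amalg_words_append amalg_words_Cons)
qed (simp add: inv_word_def)

lemma eval_inv_word:
  "w \<in> amalg_words A B \<Longrightarrow>
    eval_word n (inv_word w) * eval_word n w = 1\<^sub>m n \<and> eval_word n w * eval_word n (inv_word w) = 1\<^sub>m n"
proof (induction w)
  case (Cons x w)
  have xw: "[x] \<in> amalg_words A B" "w \<in> amalg_words A B"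
    using Cons.prems by (auto simp: amalg_words_Cons)
  let ?x = "case_sum id id x" and ?x' = "case_sum id id (inv_letter x)"
  have c: "?x \<in> carrier_mat n n" "?x' \<in> carrier_mat n n"
    "eval_word n w \<in> carrier_mat n n" "eval_word n (inv_word w) \<in> carrier_mat n n"
    using xw inv_letter(1)[OF xw(1)] letter_in_words factor_carrier inv_word_words
      eval_word_carrier_words by blast+
  have "eval_word n (inv_word (x # w)) = eval_word n (inv_word w) * ?x'"
    using inv_letter(1)[OF xw(1)] eval_word_append_words[OF inv_word_words[OF xw(2)]] c(2)
    by (simp add: inv_word_Cons eval_word_Cons)
  moreover have "eval_word n (inv_word w) * ?x' * (?x * eval_word n w) =
      eval_word n (inv_word w) * ((?x' * ?x) * eval_word n w)" using c by (simp add: assoc_mult_mat[of _ n n _ n _ n])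
  moreover have "?x * eval_word n w * (eval_word n (inv_word w) * ?x') =
      ?x * ((eval_word n w * eval_word n (inv_word w)) * ?x')" using c by (simp add: assoc_mult_mat[of _ n n _ n _ n])
  ultimately show ?case using Cons.IH[OF xw(2)] inv_letter(3,4)[OF xw(1)] c by (simp add: eval_word_Cons)
qed (simp add: inv_word_def)

lemma inv_word_append_equiv: "w \<in> amalg_words A B \<Longrightarrow> inv_word w @ w \<sim> []"
proof (induction w)
  case (Cons x w)
  have xw: "[x] \<in> amalg_words A B" "w \<in> amalg_words A B" using Cons.prems by (auto simp: amalg_words_Cons)
  have "inv_word w @ [inv_letter x, x] @ w \<sim> inv_word w @ [] @ w"
    by (rule amalg_eq_append_context[OF inv_letter(2)[OF xw(1)]])
  then show ?case using Cons.IH[OF xw(2)] amalg_eq_trans by (fastforce simp: inv_word_Cons)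
qed (simp add: inv_word_def amalg_eq_refl)

lemma eval_words_subgroup: "subgroup_GL n (eval_word n ` amalg_words A B)"
  unfolding subgroup_GL_def
proof (intro conjI ballI)
  show "eval_word n ` amalg_words A B \<subseteq> GL_mat n"
    unfolding GL_mat_def using eval_inv_word eval_word_carrier_words inv_word_words by blast
  show "1\<^sub>m n \<in> eval_word n ` amalg_words A B" using amalg_words_Nil eval_word_Nil by (metis image_eqI)
  fix g h assume "g \<in> eval_word n ` amalg_words A B"
  then obtain w where w: "w \<in> amalg_words A B" "g = eval_word n w" by blast
  show "\<exists>g'\<in>eval_word n ` amalg_words A B. g * g' = 1\<^sub>m n \<and> g' * g = 1\<^sub>m n"
    using eval_inv_word[OF w(1)] inv_word_words[OF w(1)] w by blast
  assume "h \<in> eval_word n ` amalg_words A B"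
  then obtain v where v: "v \<in> amalg_words A B" "h = eval_word n v" by blast
  show "g * h \<in> eval_word n ` amalg_words A B"
    using eval_word_append_words[OF w(1) v(1)] w v amalg_words_append by (metis image_eqI)
qed

lemma eval_words_eq_gen_subgroup: "eval_word n ` amalg_words A B = gen_subgroup n (A \<union> B)"
proof
  have "eval_word n w \<in> G" if G: "subgroup_GL n G" "A \<union> B \<subseteq> G" and w: "w \<in> amalg_words A B" for G w
    using w
  proof (induction w)
    case (Cons x w)
    then have "case_sum id id x \<in> G" using G(2) by (cases x) (auto simp: amalg_words_Cons)
    then show ?case using Cons subgroup_GL_mult[OF G(1)] by (simp add: eval_word_Cons amalg_words_Cons)
  qed (use subgroup_GL_one[OF G(1)] in simp)
  then show "eval_word n ` amalg_words A B \<subseteq> gen_subgroup n (A \<union> B)"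
    unfolding gen_subgroup_def by blast
next
  have "g \<in> eval_word n ` amalg_words A B" if "g \<in> factor b" for g b
  proof (rule image_eqI)
    have "g \<in> carrier_mat n n" using that factor_carrier by blast
    then show "g = eval_word n [side b g]" by (simp add: eval_word_Cons)
  qed (use that side_in_words in simp)
  from this[of _ True] this[of _ False] have "A \<union> B \<subseteq> eval_word n ` amalg_words A B"
    by auto
  then show "gen_subgroup n (A \<union> B) \<subseteq> eval_word n ` amalg_words A B"
    unfolding gen_subgroup_def using eval_words_subgroup by blast
qed

theorem canonical_iso_if_reduced_words_nontrivial:
  assumes nontrivial: "\<And>w. reduced_word A C B w \<Longrightarrow> w \<noteq> [] \<Longrightarrow> eval_word n w \<noteq> 1\<^sub>m n"
  shows "amalg_canonical_iso n A C B"
proof -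
  have trivial: "w \<sim> []" if w: "w \<in> amalg_words A B" and e: "eval_word n w = 1\<^sub>m n" for w
  proof -
    obtain w' where w': "w \<sim> w'" "normal_form w'" using obtain_normal_form[OF w] .
    have "eval_word n w' = 1\<^sub>m n" using amalg_eq_eval[OF w'(1) w] e by simp
    then have "w' = [] \<or> w' = [Inl (1\<^sub>m n)]"
      using w'(2) nontrivial C_carrier unfolding normal_form_def by (auto simp: eval_word_Cons)
    then show ?thesis using w'(1) side_one_equiv[of True "[]"] amalg_eq_trans by auto
  qed
  have "eval_word n w1 = eval_word n w2 \<longleftrightarrow> w1 \<sim> w2"
    if w: "w1 \<in> amalg_words A B" "w2 \<in> amalg_words A B" for w1 w2
  proof
    assume "w1 \<sim> w2" then show "eval_word n w1 = eval_word n w2" using amalg_eq_eval w by blast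
  next
    assume e: "eval_word n w1 = eval_word n w2"
    have iw: "inv_word w2 \<in> amalg_words A B" using inv_word_words w by simp
    have "eval_word n (w1 @ inv_word w2) = 1\<^sub>m n"
      using eval_word_append_words[OF w(1) iw] e eval_inv_word[OF w(2)] by simp
    then have "w1 @ inv_word w2 \<sim> []" using trivial w iw amalg_words_append by blast
    from amalg_eq_append_context[OF this, of "[]" w2] have "w1 @ inv_word w2 @ w2 \<sim> w2" by simp
    moreover have "w1 @ inv_word w2 @ w2 \<sim> w1"
      using amalg_eq_append_context[OF inv_word_append_equiv[OF w(2)], of w1 "[]"] by simp
    ultimately show "w1 \<sim> w2" using amalg_eq_sym amalg_eq_trans by blast
  qed
  then show ?thesis unfolding amalg_canonical_iso_def using eval_words_eq_gen_subgroup by blast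
qed

lemma reduced_side_snoc: "reduced_word A C B (ws @ [side b g]) \<longleftrightarrow>
    g \<in> factor b - C \<and> reduced_word A C B ws \<and> (ws \<noteq> [] \<longrightarrow> isl (last ws) \<noteq> b)"
  by (cases b) (auto simp: reduced_word_snoc amalg_words_Cons)

lemma reduced_word_factors_nonempty:
  "reduced_word A C B (x # y # r) \<Longrightarrow> A - C \<noteq> {} \<and> B - C \<noteq> {}"
  by (cases x; cases y) (auto simp: reduced_word_Cons amalg_words_Cons)

lemma eval_single_reduced_word: "reduced_word A C B [x] \<Longrightarrow> eval_word n [x] \<noteq> 1\<^sub>m n"
proof -
  assume x: "reduced_word A C B [x]"
  obtain b g where x_eq: "x = side b g" by (rule obtain_side)
  then have g: "g \<in> factor b" "g \<notin> C" using x by (auto simp: reduced_side_Cons)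
  moreover have "g \<in> carrier_mat n n" using g factor_carrier by blast
  ultimately have "eval_word n [x] = g" using x_eq by (simp add: eval_word_Cons)
  then show ?thesis using g subgroup_GL_one[OF subgroup_C] by auto
qed

lemma GL_inv_notin_C:
  assumes g: "g \<in> factor b" "g \<notin> C" shows "GL_inv n (factor b) g \<notin> C"
proof
  assume "GL_inv n (factor b) g \<in> C"
  moreover have "GL_inv n (factor b) g * g \<in> C"
    using GL_inv[OF subgroup_factor g(1)] subgroup_GL_one[OF subgroup_C] by simp
  moreover have "g \<in> carrier_mat n n" using g(1) factor_carrier by blast
  ultimately show False using subgroup_GL_cancel_left[OF subgroup_C] g(2) by blast
qed

lemma inv_mult_notin_C:
  assumes a: "a \<in> factor b" and g: "g \<in> factor b" and a_coset: "\<forall>c\<in>C. a \<noteq> g * c"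
  shows "GL_inv n (factor b) a * g \<notin> C"
proof
  let ?a' = "GL_inv n (factor b) a"
  assume c: "?a' * g \<in> C"
  have inv: "?a' \<in> factor b" "a * ?a' = 1\<^sub>m n" using GL_inv[OF subgroup_factor a] by auto
  have cc: "?a' * g \<in> carrier_mat n n" "GL_inv n C (?a' * g) \<in> carrier_mat n n"
    "a \<in> carrier_mat n n" "?a' \<in> carrier_mat n n" "g \<in> carrier_mat n n"
    using c GL_inv[OF subgroup_C c] C_carrier factor_carrier a g inv(1) by auto
  have "g * GL_inv n C (?a' * g) = a * (?a' * g) * GL_inv n C (?a' * g)"
    using cc inv(2) by (simp add: assoc_mult_mat[of _ n n _ n _ n, symmetric])
  also have "\<dots> = a" using cc GL_inv[OF subgroup_C c] by (simp add: assoc_mult_mat[of _ n n _ n _ n])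
  finally show False using a_coset GL_inv[OF subgroup_C c] by metis
qed

lemma mult_notin_C:
  assumes z: "z \<in> factor b" and a: "a \<in> factor b" and a_coset: "\<forall>c\<in>C. a \<noteq> GL_inv n (factor b) z * c"
  shows "z * a \<notin> C"
proof
  assume "z * a \<in> C"
  moreover have "GL_inv n (factor b) z * (z * a) = a"
  proof -
    have "GL_inv n (factor b) z \<in> carrier_mat n n" "z \<in> carrier_mat n n" "a \<in> carrier_mat n n"
      using GL_inv[OF subgroup_factor z] z a factor_carrier by blast+
    then show ?thesis using GL_inv[OF subgroup_factor z]
      by (simp add: assoc_mult_mat[of _ n n _ n _ n, symmetric])
  qed
  ultimately show False using a_coset by metis
qed

lemma eval_word_snoc:
  assumes "w \<in> amalg_words A B" "g \<in> factor b"
  shows "eval_word n (w @ [side b g]) = eval_word n w * g"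
proof -
  have "g \<in> carrier_mat n n" using assms(2) factor_carrier by blast
  then show ?thesis using eval_word_append_words[of w "[side b g]"] side_in_words assms
    by (simp add: eval_word_Cons)
qed

text \<open>The conjugating element avoids the cosets C and g C, which an index above 2 permits.\<close>
lemma conjugate_reduced_word_head:
  assumes w: "reduced_word A C B (side b g # u)" "u \<noteq> []" "isl (last u) \<noteq> b"
    and index: "sub_index (factor b) C > 2"
  shows "\<exists>w' a. reduced_word A C B w' \<and> w' \<noteq> [] \<and> isl (hd w') = isl (last w') \<and> a \<in> factor b \<and>
    eval_word n w' = GL_inv n (factor b) a * eval_word n (side b g # u) * a"
proof -
  have g: "g \<in> factor b - C" and u: "reduced_word A C B u" "isl (hd u) \<noteq> b"
    using w by (auto simp: reduced_side_Cons)
  obtain a where a: "a \<in> factor b" "a \<notin> C" "\<forall>c\<in>C. a \<noteq> g * c"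
    using obtain_third_coset[OF subgroup_factor subgroup_C C_factor index] g by blast
  let ?a' = "GL_inv n (factor b) a"
  have a'g: "?a' * g \<in> factor b - C"
    using inv_mult_notin_C[OF a(1) _ a(3)] g subgroup_GL_mult[OF subgroup_factor]
      GL_inv[OF subgroup_factor a(1)] by blast
  let ?w' = "side b (?a' * g) # u @ [side b a]"
  have "reduced_word A C B ?w'"
    using a'g u w(2,3) a by (simp add: reduced_side_Cons reduced_side_snoc)
  moreover have "eval_word n ?w' = ?a' * eval_word n (side b g # u) * a"
  proof -
    have c: "?a' \<in> carrier_mat n n" "g \<in> carrier_mat n n" "eval_word n u \<in> carrier_mat n n"
      "a \<in> carrier_mat n n"
      using GL_inv[OF subgroup_factor a(1)] g a factor_carrier eval_word_carrier_words
        reduced_word_words[OF u(1)] by blast+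
    then show ?thesis using eval_word_snoc[OF reduced_word_words[OF u(1)] a(1)]
      by (simp add: eval_word_Cons assoc_mult_mat[of _ n n _ n _ n])
  qed
  ultimately show ?thesis using a(1) by (intro exI[of _ ?w'] exI[of _ a]) auto
qed

lemma conjugate_reduced_word_last:
  assumes w: "reduced_word A C B (u @ [side b z])" "u \<noteq> []" "isl (hd u) \<noteq> b"
    and index: "sub_index (factor b) C > 2"
  shows "\<exists>w' a. reduced_word A C B w' \<and> w' \<noteq> [] \<and> isl (hd w') = isl (last w') \<and> a \<in> factor b \<and>
    eval_word n w' = GL_inv n (factor b) a * eval_word n (u @ [side b z]) * a"
proof -
  have z: "z \<in> factor b - C" and u: "reduced_word A C B u" "isl (last u) \<noteq> b"
    using w by (auto simp: reduced_side_snoc)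
  obtain a where a: "a \<in> factor b" "a \<notin> C" "\<forall>c\<in>C. a \<noteq> GL_inv n (factor b) z * c"
    using obtain_third_coset[OF subgroup_factor subgroup_C C_factor index] GL_inv[OF subgroup_factor] z
    by blast
  let ?a' = "GL_inv n (factor b) a"
  have a': "?a' \<in> factor b - C" using GL_inv[OF subgroup_factor a(1)] GL_inv_notin_C a by blast
  have za: "z * a \<in> factor b - C"
    using mult_notin_C[OF _ a(1) a(3)] z a(1) subgroup_GL_mult[OF subgroup_factor] by blast
  let ?w' = "side b ?a' # u @ [side b (z * a)]"
  have "reduced_word A C B ?w'"
    using a' za u w(2,3) by (simp add: reduced_side_Cons reduced_side_snoc)
  moreover have "eval_word n ?w' = ?a' * eval_word n (u @ [side b z]) * a"
  proof -
    have c: "?a' \<in> carrier_mat n n" "z \<in> carrier_mat n n" "eval_word n u \<in> carrier_mat n n"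
      "a \<in> carrier_mat n n"
      using a' z a factor_carrier eval_word_carrier_words reduced_word_words[OF u(1)] by blast+
    then show ?thesis using eval_word_snoc[OF reduced_word_words[OF u(1)]] z za
      by (simp add: eval_word_Cons assoc_mult_mat[of _ n n _ n _ n])
  qed
  ultimately show ?thesis using a(1) by (intro exI[of _ ?w'] exI[of _ a]) auto
qed

lemma conjugate_reduced_word:
  assumes index: "sub_index A C > 2 \<or> sub_index B C > 2"
    and w: "reduced_word A C B w" "w \<noteq> []" "isl (hd w) \<noteq> isl (last w)"
  shows "\<exists>w' b a. reduced_word A C B w' \<and> w' \<noteq> [] \<and> isl (hd w') = isl (last w') \<and> a \<in> factor b \<and>
    eval_word n w' = GL_inv n (factor b) a * eval_word n w * a"
proof -
  obtain x u where xu: "w = x # u" using w(2) by (cases w) auto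
  obtain b g where x: "x = side b g" by (rule obtain_side)
  have "u \<noteq> []" using w(3) xu by auto
  then have u: "u \<noteq> []" "isl (last u) \<noteq> b" using w(3) xu x by auto
  obtain b' z where z: "last w = side b' z" by (rule obtain_side)
  have b': "b' = (\<not> b)" using z w(3) xu x by auto
  define u' where "u' = butlast w"
  have u': "w = u' @ [side (\<not> b) z]"
    unfolding u'_def using append_butlast_last_id[OF w(2)] z b' by auto
  have "u' \<noteq> []" "isl (hd u') \<noteq> (\<not> b)"
    using u(1) xu x unfolding u'_def by (cases u; simp)+
  moreover have "sub_index (factor b) C > 2 \<or> sub_index (factor (\<not> b)) C > 2"
    using index by (cases b) auto
  moreover have "reduced_word A C B (side b g # u)" using w(1) xu x by simp
  moreover have "reduced_word A C B (u' @ [side (\<not> b) z])" using w(1) u' by simp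
  ultimately show ?thesis
    using conjugate_reduced_word_head[of b g u] conjugate_reduced_word_last[of u' "\<not> b" z] xu x u u'
    by (metis (no_types, lifting))
qed

lemma eval_reduced_word_ping_pong:
  assumes Y: "\<And>b. Y b \<subseteq> carrier_vec n"
    and act: "\<And>b g v. g \<in> factor b - C \<Longrightarrow> v \<in> Y (\<not> b) \<Longrightarrow> g *\<^sub>v v \<in> Y b"
  shows "reduced_word A C B w \<Longrightarrow> w \<noteq> [] \<Longrightarrow> v \<in> Y (\<not> isl (last w)) \<Longrightarrow>
    eval_word n w *\<^sub>v v \<in> Y (isl (hd w))"
proof (induction w arbitrary: v)
  case (Cons x w)
  obtain b g where x: "x = side b g" by (rule obtain_side)
  have g: "g \<in> factor b - C" and w: "reduced_word A C B w" and alt: "w \<noteq> [] \<longrightarrow> isl (hd w) \<noteq> b"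
    using Cons.prems(1) x by (auto simp: reduced_side_Cons)
  have gc: "g \<in> carrier_mat n n" using g factor_carrier by blast
  have vc: "v \<in> carrier_vec n" using Cons.prems(3) Y by blast
  show ?case
  proof (cases "w = []")
    case True
    then show ?thesis using act[OF g] Cons.prems(3) x gc vc by (simp add: eval_word_Cons)
  next
    case False
    have "eval_word n w *\<^sub>v v \<in> Y (isl (hd w))" using Cons.IH[OF w False] Cons.prems(3) False by simp
    moreover have "isl (hd w) = (\<not> b)" using alt False by blast
    moreover have "eval_word n (x # w) *\<^sub>v v = g *\<^sub>v (eval_word n w *\<^sub>v v)"
      using x gc eval_word_carrier_words[OF reduced_word_words[OF w]] vc by (simp add: eval_word_Cons)
    ultimately show ?thesis using act[OF g] x by simp
  qed
qed simp

lemma reduced_word_eval_one_same_ends: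
  assumes index: "sub_index A C > 2 \<or> sub_index B C > 2"
    and w: "reduced_word A C B w" "w \<noteq> []" and one: "eval_word n w = 1\<^sub>m n"
  obtains w' where "reduced_word A C B w'" "w' \<noteq> []" "isl (hd w') = isl (last w')"
    "eval_word n w' = 1\<^sub>m n"
proof (cases "isl (hd w) = isl (last w)")
  case False
  then obtain w' b a where w': "reduced_word A C B w'" "w' \<noteq> []" "isl (hd w') = isl (last w')"
    and a: "a \<in> factor b" and ev: "eval_word n w' = GL_inv n (factor b) a * eval_word n w * a"
    using conjugate_reduced_word[OF index w] by blast
  have "GL_inv n (factor b) a \<in> carrier_mat n n"
    using GL_inv[OF subgroup_factor a] factor_carrier by blast
  then have "eval_word n w' = 1\<^sub>m n" using ev one GL_inv[OF subgroup_factor a] by simp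
  then show thesis using that w' by blast
qed (use w one that in blast)

theorem ping_pong_canonical_iso:
  assumes index: "sub_index A C > 2 \<or> sub_index B C > 2"
    and Y: "\<And>b. Y b \<subseteq> carrier_vec n" and disjoint: "Y True \<inter> Y False = {}"
    and act: "\<And>b g v. g \<in> factor b - C \<Longrightarrow> v \<in> Y (\<not> b) \<Longrightarrow> g *\<^sub>v v \<in> Y b"
    and nonempty: "\<And>b. A - C \<noteq> {} \<Longrightarrow> B - C \<noteq> {} \<Longrightarrow> Y b \<noteq> {}"
  shows "amalg_canonical_iso n A C B"
proof (rule canonical_iso_if_reduced_words_nontrivial)
  fix w assume w: "reduced_word A C B w" "w \<noteq> []"
  show "eval_word n w \<noteq> 1\<^sub>m n"
  proof
    assume "eval_word n w = 1\<^sub>m n"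
    then obtain w' where w': "reduced_word A C B w'" "w' \<noteq> []" "isl (hd w') = isl (last w')"
      "eval_word n w' = 1\<^sub>m n"
      using reduced_word_eval_one_same_ends[OF index w] by blast
    show False
    proof (cases w')
      case (Cons x r)
      show False
      proof (cases r)
        case Nil
        then show False using eval_single_reduced_word w' Cons by simp
      next
        case (Cons y r')
        then have "A - C \<noteq> {}" "B - C \<noteq> {}"
          using reduced_word_factors_nonempty w'(1) \<open>w' = x # r\<close> by blast+
        then obtain v where v: "v \<in> Y (\<not> isl (last w'))" using nonempty by blast
        have "eval_word n w' *\<^sub>v v \<in> Y (isl (hd w'))"
          using eval_reduced_word_ping_pong[of Y, OF Y act w'(1,2) v] .
        moreover have "v \<in> carrier_vec n" using v Y by blast
        ultimately have "v \<in> Y (isl (hd w'))" using w'(4) by simp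
        then show False using v w'(3) disjoint by (cases "isl (hd w')") auto
      qed
    qed (use w' in simp)
  qed
qed

end

lemma amalg_step_map_word:
  assumes hom: "\<And>x y. x \<in> B \<Longrightarrow> y \<in> B \<Longrightarrow> f (x * y) = f x * f y"
    and maps: "\<And>x. x \<in> B \<Longrightarrow> f x \<in> B'" and one: "f (1\<^sub>m n) = 1\<^sub>m n" and fix_C: "\<And>c. c \<in> C \<Longrightarrow> f c = c"
  shows "amalg_step n A C B u v \<Longrightarrow> amalg_step n A C B' (map_word f u) (map_word f v)"
proof (induction rule: amalg_step.induct)
  case (mulA x y u v)
  then show ?case using amalg_step.mulA[of x A y n C B' "map_word f u" "map_word f v"]
    by (simp add: map_word_def)
next
  case (mulB x y u v)
  then show ?case using amalg_step.mulB[of "f x" B' "f y" n A C "map_word f u" "map_word f v"] hom maps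
    by (simp add: map_word_def)
next
  case (oneA u v)
  then show ?case using amalg_step.oneA[of n A C B' "map_word f u" "map_word f v"]
    by (simp add: map_word_def)
next
  case (oneB u v)
  then show ?case using amalg_step.oneB[of n A C B' "map_word f u" "map_word f v"] one
    by (simp add: map_word_def)
next
  case (amal c u v)
  then show ?case using amalg_step.amal[of c C n A B' "map_word f u" "map_word f v"] fix_C
    by (simp add: map_word_def)
qed

lemma (in amalgam) amalg_induced_iso_of_bij:
  assumes bij: "bij_betw f B B'"
    and hom: "\<And>x y. x \<in> B \<Longrightarrow> y \<in> B \<Longrightarrow> f (x * y) = f x * f y" and fix_C: "\<And>c. c \<in> C \<Longrightarrow> f c = c"
  shows "amalg_induced_iso n f A C B B'"
proof -
  define g where "g = inv_into B f"
  have f_maps: "f x \<in> B'" if "x \<in> B" for x using bij that bij_betwE by blast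
  have g_maps: "g y \<in> B" if "y \<in> B'" for y
    unfolding g_def using bij that by (metis bij_betw_def inv_into_into)
  have gf: "g (f x) = x" if "x \<in> B" for x
    unfolding g_def using bij that bij_betw_inv_into_left by fastforce
  have fg: "f (g y) = y" if "y \<in> B'" for y
    unfolding g_def using bij that bij_betw_inv_into_right by fastforce
  have one: "1\<^sub>m n \<in> C" using subgroup_GL_one[OF subgroup_C] .
  have g_hom: "g (x * y) = g x * g y" if "x \<in> B'" "y \<in> B'" for x y
    using hom[OF g_maps g_maps] gf subgroup_GL_mult[OF subgroup_B g_maps g_maps] fg that by metis
  have g_fix: "g c = c" if "c \<in> C" for c using gf fix_C that C_B by (metis subsetD)
  have f_eq: "amalg_eq n A C B' (map_word f u) (map_word f v)" if "u \<sim> v" for u v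
    using that unfolding amalg_eq_def
    by (rule equivclp_map[rotated]) (rule amalg_step_map_word[OF hom f_maps fix_C[OF one] fix_C])
  have g_eq: "map_word g u \<sim> map_word g v" if "amalg_eq n A C B' u v" for u v
    using that unfolding amalg_eq_def
    by (rule equivclp_map[rotated]) (rule amalg_step_map_word[OF g_hom g_maps g_fix[OF one] g_fix])
  have gf_word: "map_word g (map_word f w) = w" if "w \<in> amalg_words A B" for w
    using that unfolding map_word_def amalg_words_def by (induction w) (auto split: sum.splits simp: gf)
  have fg_word: "map_word f (map_word g w) = w" if "w \<in> amalg_words A B'" for w
    using that unfolding map_word_def amalg_words_def by (induction w) (auto split: sum.splits simp: fg)
  have g_words: "map_word g w \<in> amalg_words A B" if "w \<in> amalg_words A B'" for w
    using that unfolding map_word_def amalg_words_def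
  proof (induction w)
    case (Cons x w) then show ?case by (cases x) (auto simp: g_maps)
  qed simp
  show ?thesis unfolding amalg_induced_iso_def
  proof (intro conjI ballI)
    fix w1 w2 assume "w1 \<in> amalg_words A B" "w2 \<in> amalg_words A B"
    then show "w1 \<sim> w2 \<longleftrightarrow> amalg_eq n A C B' (map_word f w1) (map_word f w2)"
      using f_eq g_eq[of "map_word f w1" "map_word f w2"] gf_word by auto
  next
    fix w' assume "w' \<in> amalg_words A B'"
    then show "\<exists>w\<in>amalg_words A B. amalg_eq n A C B' (map_word f w) w'"
      using g_words fg_word amalg_eq_refl by metis
  qed
qed

section \<open>Deformations of a finite subgroup\<close>

lemma power_unipotent:
  fixes E :: "'a::division_ring mat"
  assumes E: "E \<in> carrier_mat n n" "E * E = 0\<^sub>m n n"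
  shows "(1\<^sub>m n + E) ^\<^sub>m m = 1\<^sub>m n + of_nat m \<cdot>\<^sub>m E"
proof (induction m)
  case 0 then show ?case using E by (intro eq_matI) auto
next
  case (Suc m)
  have mE: "of_nat m \<cdot>\<^sub>m E \<in> carrier_mat n n" using E by simp
  have "(1\<^sub>m n + of_nat m \<cdot>\<^sub>m E) * (1\<^sub>m n + E) = 1\<^sub>m n * (1\<^sub>m n + E) + of_nat m \<cdot>\<^sub>m E * (1\<^sub>m n + E)"
    by (rule add_mult_distrib_mat) (use E in auto)
  also have "of_nat m \<cdot>\<^sub>m E * (1\<^sub>m n + E) = of_nat m \<cdot>\<^sub>m E * 1\<^sub>m n + of_nat m \<cdot>\<^sub>m E * E"
    by (rule mult_add_distrib_mat[OF mE]) (use E in auto)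
  also have "of_nat m \<cdot>\<^sub>m E * E = of_nat m \<cdot>\<^sub>m (E * E)" using smult_mult_mat[OF E(1) E(1)] .
  also have "1\<^sub>m n * (1\<^sub>m n + E) + (of_nat m \<cdot>\<^sub>m E * 1\<^sub>m n + of_nat m \<cdot>\<^sub>m (E * E)) =
      (1\<^sub>m n + E) + (of_nat m \<cdot>\<^sub>m E + 0\<^sub>m n n)" using E mE by simp
  also have "\<dots> = 1\<^sub>m n + of_nat (Suc m) \<cdot>\<^sub>m E"
    using E by (intro eq_matI) (auto simp: algebra_simps)
  finally show ?case using Suc by simp
qed

lemma inj_power_unipotent:
  fixes E :: "'a::division_ring mat"
  assumes E: "E \<in> carrier_mat n n" "E * E = 0\<^sub>m n n" "E \<noteq> 0\<^sub>m n n" and char_0: "char_zero_ring TYPE('a)"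
  shows "inj (\<lambda>m. (1\<^sub>m n + E) ^\<^sub>m m)"
proof (rule injI)
  obtain i j where ij: "i < n" "j < n" "E $$ (i, j) \<noteq> 0"
    using E by (metis carrier_matD eq_matI index_zero_mat(1-3))
  fix m m' assume "(1\<^sub>m n + E) ^\<^sub>m m = (1\<^sub>m n + E) ^\<^sub>m m'"
  then have "(1\<^sub>m n + of_nat m \<cdot>\<^sub>m E) $$ (i, j) = (1\<^sub>m n + of_nat m' \<cdot>\<^sub>m E) $$ (i, j)"
    unfolding power_unipotent[OF E(1,2)] by simp
  then have "(of_nat m :: 'a) * E $$ (i, j) = of_nat m' * E $$ (i, j)" using ij E(1) by simp
  then have eq: "(of_nat m :: 'a) = of_nat m'" using ij(3) by simp
  have "(of_nat m' :: 'a) \<noteq> of_nat m" if "m < m'" for m m' :: nat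
  proof -
    have "(of_nat (m' - m) :: 'a) \<noteq> 0"
      using char_0 that unfolding char_zero_ring_def by (simp del: of_nat_diff)
    then show ?thesis using that by (simp add: of_nat_diff)
  qed
  then show "m = m'" using eq by (metis linorder_neqE_nat)
qed

lemma subgroup_GL_power:
  assumes G: "subgroup_GL n G" and g: "g \<in> G" shows "g ^\<^sub>m m \<in> G"
proof (induction m)
  case 0
  have "dim_row g = n" using subgroup_GL_carrier[OF G] g by auto
  then show ?case using subgroup_GL_one[OF G] by simp
qed (use subgroup_GL_mult[OF G] g in simp)

lemma subgroup_GL_image:
  assumes G: "subgroup_GL n G" and carrier: "\<And>g. g \<in> G \<Longrightarrow> f g \<in> carrier_mat n n"
    and hom: "\<And>g h. g \<in> G \<Longrightarrow> h \<in> G \<Longrightarrow> f (g * h) = f g * f h" and one: "f (1\<^sub>m n) = 1\<^sub>m n"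
  shows "subgroup_GL n (f ` G)"
proof -
  have inv: "f g * f (GL_inv n G g) = 1\<^sub>m n \<and> f (GL_inv n G g) * f g = 1\<^sub>m n" if "g \<in> G" for g
  proof -
    have gi: "GL_inv n G g \<in> G" "g * GL_inv n G g = 1\<^sub>m n" "GL_inv n G g * g = 1\<^sub>m n"
      using GL_inv[OF G that] by auto
    then show ?thesis using hom[OF that gi(1)] hom[OF gi(1) that] one by simp
  qed
  show ?thesis unfolding subgroup_GL_def
  proof (intro conjI ballI)
    show "f ` G \<subseteq> GL_mat n"
    proof
      fix x assume "x \<in> f ` G"
      then obtain g where g: "g \<in> G" "x = f g" by blast
      have "f (GL_inv n G g) \<in> carrier_mat n n" using carrier GL_inv[OF G g(1)] by blast
      then show "x \<in> GL_mat n" unfolding GL_mat_def using inv[OF g(1)] carrier[OF g(1)] g(2) by blast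
    qed
    show "1\<^sub>m n \<in> f ` G" using one subgroup_GL_one[OF G] by (metis image_eqI)
    fix x y assume "x \<in> f ` G"
    then obtain g where g: "g \<in> G" "x = f g" by blast
    show "\<exists>x'\<in>f ` G. x * x' = 1\<^sub>m n \<and> x' * x = 1\<^sub>m n"
      using inv[OF g(1)] GL_inv[OF G g(1)] g(2) by blast
    assume "y \<in> f ` G"
    then obtain h where h: "h \<in> G" "y = f h" by blast
    show "x * y \<in> f ` G" using hom[OF g(1) h(1)] subgroup_GL_mult[OF G g(1) h(1)] g h by (metis image_eqI)
  qed
qed

lemma sub_index_image:
  assumes inj: "inj_on f G" and hom: "\<And>g c. g \<in> G \<Longrightarrow> c \<in> C \<Longrightarrow> f (g * c) = f g * c"
    and mult: "\<And>g c. g \<in> G \<Longrightarrow> c \<in> C \<Longrightarrow> g * c \<in> G"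
  shows "sub_index (f ` G) C = sub_index G C"
proof -
  let ?L = "\<lambda>g. (\<lambda>c. g * c) ` C"
  have L: "?L (f g) = f ` ?L g" if "g \<in> G" for g
  proof -
    have "?L (f g) = (\<lambda>c. f (g * c)) ` C" using hom[OF that] by (auto intro: image_cong)
    then show ?thesis by (simp add: image_image)
  qed
  have "?L ` f ` G = (\<lambda>g. ?L (f g)) ` G" by (rule image_image)
  also have "\<dots> = (\<lambda>g. f ` ?L g) ` G" by (rule image_cong[OF refl L])
  also have "\<dots> = image f ` ?L ` G" by (rule image_image[symmetric])
  finally have "?L ` f ` G = image f ` ?L ` G" .
  moreover have "?L ` G \<subseteq> Pow G" using mult by auto
  then have "inj_on (image f) (?L ` G)" using inj_on_subset[OF inj_on_image_Pow[OF inj]] by blast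
  ultimately show ?thesis unfolding sub_index_def by (simp add: card_image)
qed

locale deformation = K_basis K av S for K :: "'d::division_ring set" and av S +
  fixes n :: nat and A H C :: "'d mat set" and \<delta> :: "'d mat \<Rightarrow> 'd mat"
  assumes finite_subgroup_A: "finite_subgroup_GL n A" and finite_subgroup_H: "finite_subgroup_GL n H"
    and C_eq: "C = A \<inter> H"
    and first_order: "first_order_deformation n H \<delta>"
    and char_0: "char_zero_ring TYPE('d)"
    and delta_eq_0_iff: "\<forall>g\<in>H. \<delta> g = 0\<^sub>m n n \<longleftrightarrow> g \<in> C"
    and transversal: "\<forall>a\<in>A - C. \<forall>h\<in>H - C. \<forall>h'\<in>H - C.
           ((\<lambda>w. a *\<^sub>v w) ` mat_im n (\<delta> h)) \<inter> mat_ker n (\<delta> h') = {0\<^sub>v n}"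
begin

lemma subgroup_A: "subgroup_GL n A" and subgroup_H: "subgroup_GL n H"
  and finite_A: "finite A" and finite_H: "finite H"
  using finite_subgroup_A finite_subgroup_H finite_subgroup_GL_imp_subgroup_GL
  unfolding finite_subgroup_GL_def by auto

lemma A_carrier: "A \<subseteq> carrier_mat n n" and H_carrier: "H \<subseteq> carrier_mat n n"
  using subgroup_GL_carrier subgroup_A subgroup_H by auto

lemma subgroup_C: "subgroup_GL n C"
  using subgroup_GL_Int[OF subgroup_A subgroup_H] C_eq by simp

lemma C_A: "C \<subseteq> A" and C_H: "C \<subseteq> H"
  using C_eq by auto

lemma delta_carrier: "h \<in> H \<Longrightarrow> \<delta> h \<in> carrier_mat n n"
  and delta_mult: "h \<in> H \<Longrightarrow> k \<in> H \<Longrightarrow> \<delta> (h * k) = \<delta> h * k + h * \<delta> k"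
  and delta_mult_delta: "h \<in> H \<Longrightarrow> k \<in> H \<Longrightarrow> \<delta> h * \<delta> k = 0\<^sub>m n n"
  using first_order unfolding first_order_deformation_def by auto

lemma deform_carrier: "h \<in> H \<Longrightarrow> deform \<delta> t h \<in> carrier_mat n n"
  unfolding deform_def using H_carrier delta_carrier by auto

lemma deform_C:
  assumes c: "c \<in> C" shows "deform \<delta> t c = c"
proof -
  have "\<delta> c = 0\<^sub>m n n" "c \<in> carrier_mat n n" using delta_eq_0_iff c C_H H_carrier by auto
  then show ?thesis unfolding deform_def by (intro eq_matI) auto
qed

lemma deform_one: "deform \<delta> t (1\<^sub>m n) = 1\<^sub>m n"
  using deform_C subgroup_GL_one[OF subgroup_C] by blast

lemma deform_mult_vec:
  assumes h: "h \<in> H" and v: "v \<in> carrier_vec n"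
  shows "deform \<delta> t h *\<^sub>v v = h *\<^sub>v v + t \<cdot>\<^sub>v (\<delta> h *\<^sub>v v)"
proof -
  have c: "h \<in> carrier_mat n n" "\<delta> h \<in> carrier_mat n n" using h H_carrier delta_carrier by auto
  show ?thesis unfolding deform_def
    using add_mult_distrib_mat_vec[OF c(1) smult_carrier_mat[OF c(2)] v] smult_mult_mat_vec[OF c(2) v] by simp
qed

lemma deform_mult:
  assumes t: "t \<in> K" and h: "h \<in> H" and k: "k \<in> H"
  shows "deform \<delta> t (h * k) = deform \<delta> t h * deform \<delta> t k"
proof -
  have c: "h \<in> carrier_mat n n" "k \<in> carrier_mat n n" "\<delta> h \<in> carrier_mat n n" "\<delta> k \<in> carrier_mat n n"
    using h k H_carrier delta_carrier by auto
  have "deform \<delta> t h * deform \<delta> t k = h * (k + t \<cdot>\<^sub>m \<delta> k) + t \<cdot>\<^sub>m \<delta> h * (k + t \<cdot>\<^sub>m \<delta> k)"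
    unfolding deform_def by (rule add_mult_distrib_mat) (use c in auto)
  also have "\<dots> = (h * k + t \<cdot>\<^sub>m (h * \<delta> k)) + (t \<cdot>\<^sub>m (\<delta> h * k) + t \<cdot>\<^sub>m (t \<cdot>\<^sub>m (\<delta> h * \<delta> k)))"
    using mult_add_distrib_mat[OF c(1) c(2) smult_carrier_mat[OF c(4)]]
      mult_add_distrib_mat[OF smult_carrier_mat[OF c(3)] c(2) smult_carrier_mat[OF c(4)]]
      mult_mat_smult_K[OF c(1) c(4) t] smult_mult_mat[OF c(3) c(2)]
      smult_mult_mat[OF c(3) smult_carrier_mat[OF c(4)]] mult_mat_smult_K[OF c(3) c(4) t]
    by simp
  also have "\<dots> = h * k + t \<cdot>\<^sub>m (\<delta> h * k + h * \<delta> k)"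
    unfolding delta_mult_delta[OF h k] using c by (intro eq_matI) (auto simp: algebra_simps)
  finally show ?thesis unfolding deform_def delta_mult[OF h k] by simp
qed

text \<open>A kernel element g \<notin> C would be the unipotent matrix 1 - t \<delta> g, of infinite order in
  characteristic 0, inside the finite group H.\<close>
lemma deform_kernel:
  assumes t: "t \<in> K" "t \<noteq> 0" and g: "g \<in> H" and one: "deform \<delta> t g = 1\<^sub>m n"
  shows "g \<in> C"
proof (rule ccontr)
  assume gC: "g \<notin> C"
  define E where "E = (- t) \<cdot>\<^sub>m \<delta> g"
  have dg: "\<delta> g \<in> carrier_mat n n" using delta_carrier[OF g] .
  have E: "E \<in> carrier_mat n n" unfolding E_def using dg by simp
  have g_eq: "g = 1\<^sub>m n + E"
  proof (rule eq_matI)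
    fix i j assume ij: "i < dim_row (1\<^sub>m n + E)" "j < dim_col (1\<^sub>m n + E)"
    then have "deform \<delta> t g $$ (i, j) = 1\<^sub>m n $$ (i, j)" using one by simp
    then show "g $$ (i, j) = (1\<^sub>m n + E) $$ (i, j)"
      using ij E g H_carrier dg unfolding deform_def E_def by (auto simp: algebra_simps)
  qed (use E g H_carrier in auto)
  have "E * E = 0\<^sub>m n n"
    unfolding E_def using smult_mult_mat[OF dg smult_carrier_mat[OF dg]]
      mult_mat_smult_K[OF dg dg K_uminus[OF t(1)]] delta_mult_delta[OF g g] by simp
  moreover have "E \<noteq> 0\<^sub>m n n"
  proof
    assume E0: "E = 0\<^sub>m n n"
    have "\<delta> g $$ (i, j) = 0" if "i < n" "j < n" for i j
    proof -
      have "E $$ (i, j) = 0\<^sub>m n n $$ (i, j)" using E0 by simp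
      then show ?thesis using that t(2) dg unfolding E_def by simp
    qed
    then have "\<delta> g = 0\<^sub>m n n" using dg by (intro eq_matI) auto
    then show False using delta_eq_0_iff g gC by blast
  qed
  ultimately have "inj (\<lambda>m. g ^\<^sub>m m)" using inj_power_unipotent[OF E] char_0 g_eq by simp
  moreover have "range (\<lambda>m. g ^\<^sub>m m) \<subseteq> H" using subgroup_GL_power[OF subgroup_H g] by auto
  ultimately show False using finite_H by (meson finite_imageD finite_subset infinite_UNIV_nat)
qed

lemma inj_on_deform:
  assumes t: "t \<in> K" "t \<noteq> 0" shows "inj_on (deform \<delta> t) H"
proof (rule inj_onI)
  fix h k assume h: "h \<in> H" and k: "k \<in> H" and e: "deform \<delta> t h = deform \<delta> t k"
  define k' where "k' = GL_inv n H k"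
  have k': "k' \<in> H" "k * k' = 1\<^sub>m n" "k' * k = 1\<^sub>m n" using GL_inv[OF subgroup_H k] unfolding k'_def by auto
  have "deform \<delta> t (h * k') = deform \<delta> t (k * k')" using deform_mult[OF t(1)] h k k'(1) e by simp
  then have hk': "deform \<delta> t (h * k') = 1\<^sub>m n" using k'(2) deform_one by simp
  then have "h * k' \<in> C" using deform_kernel[OF t] subgroup_GL_mult[OF subgroup_H h k'(1)] by blast
  then have "h * k' = 1\<^sub>m n" using deform_C hk' by metis
  then show "h = k" using mat_inverse_unique[of k' n h k] k' h k H_carrier by blast
qed

abbreviation deformed :: "'d \<Rightarrow> 'd mat set" where "deformed t \<equiv> deform \<delta> t ` H"

lemma subgroup_deformed: "t \<in> K \<Longrightarrow> subgroup_GL n (deformed t)"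
  using subgroup_GL_image[OF subgroup_H, of "deform \<delta> t"] deform_carrier deform_mult deform_one by blast

lemma C_deformed: "C \<subseteq> deformed t"
proof
  fix c assume c: "c \<in> C"
  show "c \<in> deformed t" by (rule image_eqI[of _ _ c]) (use deform_C[OF c] C_H c in auto)
qed

lemma amalgam_deformed: "t \<in> K \<Longrightarrow> amalgam n A C (deformed t)"
  unfolding amalgam_def using subgroup_A subgroup_C C_A subgroup_deformed C_deformed by blast

lemma deformed_induced_iso:
  assumes t: "t \<in> K" "t \<noteq> 0" shows "amalg_induced_iso n (deform \<delta> t) A C H (deformed t)"
proof -
  interpret amalgam n A C H using subgroup_A subgroup_H subgroup_C C_A C_H by unfold_locales
  show ?thesis
    using amalg_induced_iso_of_bij inj_on_imp_bij_betw[OF inj_on_deform[OF t]] deform_mult[OF t(1)] deform_C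
    by blast
qed

definition op_bound :: real where
  "op_bound = 1 + (\<Sum>X\<in>A \<union> H \<union> \<delta> ` H. mat_bound X)"

lemma op_bound_ge_1: "op_bound \<ge> 1"
  unfolding op_bound_def by (auto intro!: sum_nonneg mat_bound_nonneg)

lemma vnorm_op_bound:
  assumes X: "X \<in> A \<union> H \<union> \<delta> ` H" and v: "v \<in> carrier_vec n"
  shows "vnorm (X *\<^sub>v v) \<le> op_bound * vnorm v"
proof -
  have "X \<in> carrier_mat n n" using X A_carrier H_carrier delta_carrier by auto
  then have "vnorm (X *\<^sub>v v) \<le> mat_bound X * vnorm v" using vnorm_mult_mat_vec_le v by blast
  also have "mat_bound X \<le> (\<Sum>X\<in>A \<union> H \<union> \<delta> ` H. mat_bound X)"
    using X finite_A finite_H by (intro member_le_sum) (auto intro: mat_bound_nonneg)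
  then have "mat_bound X \<le> op_bound" unfolding op_bound_def by simp
  then have "mat_bound X * vnorm v \<le> op_bound * vnorm v" by (rule mult_right_mono) (rule vnorm_nonneg)
  finally show ?thesis .
qed

text \<open>By hypothesis (ii) the matrix \<delta> h' a \<delta> h has the same kernel as \<delta> h.\<close>
lemma transversal_kernel_bound:
  assumes a: "a \<in> A - C" and h: "h \<in> H - C" and h': "h' \<in> H - C"
  shows "\<exists>c\<ge>0. \<forall>x\<in>carrier_vec n. vnorm (\<delta> h *\<^sub>v x) \<le> c * vnorm (\<delta> h' *\<^sub>v (a *\<^sub>v (\<delta> h *\<^sub>v x)))"
proof -
  have c: "a \<in> carrier_mat n n" "\<delta> h \<in> carrier_mat n n" "\<delta> h' \<in> carrier_mat n n"
    using a h h' A_carrier delta_carrier by auto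
  let ?R = "\<delta> h' * (a * \<delta> h)"
  have R: "?R *\<^sub>v x = \<delta> h' *\<^sub>v (a *\<^sub>v (\<delta> h *\<^sub>v x))" if "x \<in> carrier_vec n" for x
    using assoc_mult_mat_vec[OF c(3) mult_carrier_mat[OF c(1,2)] that] assoc_mult_mat_vec[OF c(1,2) that]
    by simp
  have "\<delta> h *\<^sub>v x = 0\<^sub>v n" if x: "x \<in> carrier_vec n" and R0: "?R *\<^sub>v x = 0\<^sub>v n" for x
  proof -
    let ?u = "\<delta> h *\<^sub>v x"
    have "a *\<^sub>v ?u \<in> (\<lambda>w. a *\<^sub>v w) ` mat_im n (\<delta> h)" unfolding mat_im_def using x by blast
    moreover have "a *\<^sub>v ?u \<in> mat_ker n (\<delta> h')" unfolding mat_ker_def using R0 R[OF x] c x by auto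
    ultimately have "a *\<^sub>v ?u \<in> ((\<lambda>w. a *\<^sub>v w) ` mat_im n (\<delta> h)) \<inter> mat_ker n (\<delta> h')" by (rule IntI)
    also have "\<dots> = {0\<^sub>v n}" using transversal a h h' by blast
    finally have au: "a *\<^sub>v ?u = 0\<^sub>v n" by simp
    have ai: "GL_inv n A a * a = 1\<^sub>m n" "GL_inv n A a \<in> carrier_mat n n"
      using GL_inv[OF subgroup_A] a A_carrier by auto
    have "?u \<in> carrier_vec n" using c x by simp
    then have "?u = GL_inv n A a *\<^sub>v (a *\<^sub>v ?u)"
      using assoc_mult_mat_vec[OF ai(2) c(1), of ?u] ai(1) by simp
    then show ?thesis using au mult_mat_vec_zero[OF ai(2)] by simp
  qed
  then obtain c0 where "c0 \<ge> 0" "\<forall>x\<in>carrier_vec n. vnorm (\<delta> h *\<^sub>v x) \<le> c0 * vnorm (?R *\<^sub>v x)"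
    using kernel_bound[of ?R n n "\<delta> h" n] c by auto
  then show ?thesis using R by auto
qed

lemma uniform_transversal_bound:
  "\<exists>c\<ge>1. \<forall>a\<in>A - C. \<forall>h\<in>H - C. \<forall>h'\<in>H - C. \<forall>x\<in>carrier_vec n.
     vnorm (\<delta> h *\<^sub>v x) \<le> c * vnorm (\<delta> h' *\<^sub>v (a *\<^sub>v (\<delta> h *\<^sub>v x)))"
proof -
  let ?T = "(A - C) \<times> (H - C) \<times> (H - C)"
  have "\<forall>p\<in>?T. \<exists>c. c \<ge> 0 \<and> (\<forall>x\<in>carrier_vec n. vnorm (\<delta> (fst (snd p)) *\<^sub>v x) \<le>
      c * vnorm (\<delta> (snd (snd p)) *\<^sub>v (fst p *\<^sub>v (\<delta> (fst (snd p)) *\<^sub>v x))))"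
    using transversal_kernel_bound by auto
  then obtain c where c: "\<forall>p\<in>?T. c p \<ge> 0 \<and> (\<forall>x\<in>carrier_vec n. vnorm (\<delta> (fst (snd p)) *\<^sub>v x) \<le>
      c p * vnorm (\<delta> (snd (snd p)) *\<^sub>v (fst p *\<^sub>v (\<delta> (fst (snd p)) *\<^sub>v x))))"
    by (metis (no_types, lifting) bchoice)
  have finite: "finite ?T" using finite_A finite_H by auto
  define c' where "c' = 1 + (\<Sum>p\<in>?T. c p)"
  have c_le: "c p \<le> c'" if "p \<in> ?T" for p
  proof -
    have "c p \<le> (\<Sum>p\<in>?T. c p)" using that finite c by (intro member_le_sum) auto
    then show ?thesis unfolding c'_def by simp
  qed
  have "vnorm (\<delta> h *\<^sub>v x) \<le> c' * vnorm (\<delta> h' *\<^sub>v (a *\<^sub>v (\<delta> h *\<^sub>v x)))"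
    if p: "(a, h, h') \<in> ?T" and x: "x \<in> carrier_vec n" for a h h' x
  proof -
    have "vnorm (\<delta> h *\<^sub>v x) \<le> c (a, h, h') * vnorm (\<delta> h' *\<^sub>v (a *\<^sub>v (\<delta> h *\<^sub>v x)))"
      using c p x by fastforce
    also have "\<dots> \<le> c' * vnorm (\<delta> h' *\<^sub>v (a *\<^sub>v (\<delta> h *\<^sub>v x)))"
      using c_le[OF p] vnorm_nonneg by (rule mult_right_mono)
    finally show ?thesis .
  qed
  moreover have "c' \<ge> 1" unfolding c'_def using c by (auto intro!: sum_nonneg)
  ultimately show ?thesis by auto
qed

definition transversal_const :: real where
  "transversal_const = (SOME c. c \<ge> 1 \<and> (\<forall>a\<in>A - C. \<forall>h\<in>H - C. \<forall>h'\<in>H - C. \<forall>x\<in>carrier_vec n.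
     vnorm (\<delta> h *\<^sub>v x) \<le> c * vnorm (\<delta> h' *\<^sub>v (a *\<^sub>v (\<delta> h *\<^sub>v x)))))"

lemma transversal_const_ge_1: "transversal_const \<ge> 1"
  and transversal_const_bound: "a \<in> A - C \<Longrightarrow> h \<in> H - C \<Longrightarrow> h' \<in> H - C \<Longrightarrow> x \<in> carrier_vec n \<Longrightarrow>
    vnorm (\<delta> h *\<^sub>v x) \<le> transversal_const * vnorm (\<delta> h' *\<^sub>v (a *\<^sub>v (\<delta> h *\<^sub>v x)))"
  using someI_ex[OF uniform_transversal_bound] unfolding transversal_const_def by blast+

definition eta :: real where "eta = 1 / (8 * transversal_const * op_bound\<^sup>2)"

definition expansion_const :: real where "expansion_const = 1 / (4 * transversal_const * op_bound)"

definition threshold :: real where "threshold = (op_bound + op_bound / eta) / expansion_const"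

lemma eta_pos: "eta > 0" and eta_le_half: "eta \<le> 1 / 2" and expansion_const_pos: "expansion_const > 0"
proof -
  have "op_bound\<^sup>2 \<ge> 1" using op_bound_ge_1 by (simp add: one_le_power)
  then have "transversal_const * op_bound\<^sup>2 \<ge> 1"
    using mult_mono[OF transversal_const_ge_1] transversal_const_ge_1 by fastforce
  then have "8 * transversal_const * op_bound\<^sup>2 \<ge> 8" by simp
  then show "eta > 0" "eta \<le> 1 / 2" unfolding eta_def by (auto simp: divide_simps)
  show "expansion_const > 0"
    unfolding expansion_const_def using transversal_const_ge_1 op_bound_ge_1 by simp
qed

definition near_image :: "'d vec set" where
  "near_image = {v \<in> carrier_vec n. v \<noteq> 0\<^sub>v n \<and>
     (\<exists>h\<in>H - C. \<exists>x\<in>carrier_vec n. vnorm (v - \<delta> h *\<^sub>v x) \<le> eta * vnorm v)}"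

definition expanded :: "'d vec set" where
  "expanded = {v \<in> carrier_vec n. v \<noteq> 0\<^sub>v n \<and> (\<forall>h\<in>H - C. expansion_const * vnorm v \<le> vnorm (\<delta> h *\<^sub>v v))}"

lemma expanded_if_near_image:
  assumes a: "a \<in> A - C" and h: "h \<in> H - C" "h' \<in> H - C" and x: "x \<in> carrier_vec n"
    and v: "v \<in> carrier_vec n" and close: "vnorm (v - \<delta> h *\<^sub>v x) \<le> eta * vnorm v"
  shows "expansion_const * vnorm (a *\<^sub>v v) \<le> vnorm (\<delta> h' *\<^sub>v (a *\<^sub>v v))"
proof -
  let ?c = transversal_const and ?M = op_bound
  define u where "u = \<delta> h *\<^sub>v x"
  have ac: "a \<in> carrier_mat n n" and dc: "\<delta> h' \<in> carrier_mat n n" and "\<delta> h \<in> carrier_mat n n"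
    using a h A_carrier delta_carrier by auto
  then have uc: "u \<in> carrier_vec n" unfolding u_def using x by auto
  have "vnorm v \<le> vnorm (v - u) + vnorm u" by (rule vnorm_le_diff_add[OF v uc])
  moreover have "eta * vnorm v \<le> 1 / 2 * vnorm v" by (rule mult_right_mono[OF eta_le_half vnorm_nonneg])
  ultimately have u_big: "vnorm v / 2 \<le> vnorm u" using close unfolding u_def by linarith
  have "\<delta> h' *\<^sub>v (a *\<^sub>v (u - v)) = \<delta> h' *\<^sub>v (a *\<^sub>v u) - \<delta> h' *\<^sub>v (a *\<^sub>v v)"
    using ac dc uc v by (simp add: mult_minus_distrib_mat_vec)
  then have split: "vnorm (\<delta> h' *\<^sub>v (a *\<^sub>v u)) \<le> vnorm (\<delta> h' *\<^sub>v (a *\<^sub>v (u - v))) + vnorm (\<delta> h' *\<^sub>v (a *\<^sub>v v))"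
    using vnorm_le_diff_add[of "\<delta> h' *\<^sub>v (a *\<^sub>v u)" n "\<delta> h' *\<^sub>v (a *\<^sub>v v)"] ac dc uc v by simp
  have "vnorm (\<delta> h' *\<^sub>v (a *\<^sub>v (u - v))) \<le> ?M * vnorm (a *\<^sub>v (u - v))"
    using vnorm_op_bound h(2) ac uc v by simp
  also have "\<dots> \<le> ?M * (?M * vnorm (u - v))"
    using vnorm_op_bound[of a "u - v"] a uc v op_bound_ge_1 by (intro mult_left_mono) auto
  also have "\<dots> \<le> ?M * (?M * (eta * vnorm v))"
    using close vnorm_minus_commute[OF uc v] op_bound_ge_1 unfolding u_def
    by (intro mult_left_mono) auto
  also have "\<dots> = vnorm v / (8 * ?c)"
    unfolding eta_def using op_bound_ge_1 transversal_const_ge_1 by (simp add: power2_eq_square)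
  finally have small: "?c * vnorm (\<delta> h' *\<^sub>v (a *\<^sub>v (u - v))) \<le> vnorm v / 8"
    using transversal_const_ge_1 by (simp add: field_simps)
  have "vnorm u \<le> ?c * vnorm (\<delta> h' *\<^sub>v (a *\<^sub>v u))"
    using transversal_const_bound[OF a h x] unfolding u_def .
  also have "\<dots> \<le> ?c * vnorm (\<delta> h' *\<^sub>v (a *\<^sub>v (u - v))) + ?c * vnorm (\<delta> h' *\<^sub>v (a *\<^sub>v v))"
    using mult_left_mono[OF split] transversal_const_ge_1 by (simp add: distrib_left)
  finally have Q: "3 / 8 * vnorm v \<le> ?c * vnorm (\<delta> h' *\<^sub>v (a *\<^sub>v v))" using u_big small by linarith
  have "expansion_const * vnorm (a *\<^sub>v v) \<le> expansion_const * (?M * vnorm v)"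
    using vnorm_op_bound[of a v] a v expansion_const_pos by (intro mult_left_mono) auto
  also have "\<dots> = vnorm v / (4 * ?c)"
    unfolding expansion_const_def using op_bound_ge_1 by simp
  also have "\<dots> \<le> 3 / 8 * vnorm v / ?c"
    using vnorm_nonneg[of v] transversal_const_ge_1 by (simp add: field_simps)
  also have "\<dots> \<le> vnorm (\<delta> h' *\<^sub>v (a *\<^sub>v v))"
    using Q transversal_const_ge_1 by (simp add: pos_divide_le_eq algebra_simps)
  finally show ?thesis .
qed

lemma A_maps_near_image_into_expanded:
  assumes a: "a \<in> A - C" and v: "v \<in> near_image"
  shows "a *\<^sub>v v \<in> expanded"
proof -
  obtain h x where vc: "v \<in> carrier_vec n" "v \<noteq> 0\<^sub>v n" and h: "h \<in> H - C" and x: "x \<in> carrier_vec n"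
    and close: "vnorm (v - \<delta> h *\<^sub>v x) \<le> eta * vnorm v"
    using v unfolding near_image_def by blast
  have ai: "GL_inv n A a * a = 1\<^sub>m n" "GL_inv n A a \<in> carrier_mat n n" "a \<in> carrier_mat n n"
    using GL_inv[OF subgroup_A] a A_carrier by auto
  have "a *\<^sub>v v \<noteq> 0\<^sub>v n"
  proof
    assume "a *\<^sub>v v = 0\<^sub>v n"
    then have "(GL_inv n A a * a) *\<^sub>v v = 0\<^sub>v n"
      using assoc_mult_mat_vec[OF ai(2,3) vc(1)] mult_mat_vec_zero[OF ai(2)] by simp
    then show False using ai(1) vc by simp
  qed
  then show ?thesis unfolding expanded_def
    using expanded_if_near_image[OF a h _ x vc(1) close] ai(3) vc(1) by auto
qed

lemma deform_maps_expanded_into_near_image: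
  assumes t: "t \<in> K" "threshold \<le> av t" and h: "h \<in> H - C" and v: "v \<in> expanded"
  shows "deform \<delta> t h *\<^sub>v v \<in> near_image"
proof -
  have vc: "v \<in> carrier_vec n" "v \<noteq> 0\<^sub>v n" and expand: "expansion_const * vnorm v \<le> vnorm (\<delta> h *\<^sub>v v)"
    using v h unfolding expanded_def by auto
  have V: "vnorm v > 0" using vnorm_pos vc by blast
  have dc: "\<delta> h \<in> carrier_mat n n" using h delta_carrier by auto
  define w where "w = deform \<delta> t h *\<^sub>v v"
  define u where "u = \<delta> h *\<^sub>v (t \<cdot>\<^sub>v v)"
  have u_eq: "u = t \<cdot>\<^sub>v (\<delta> h *\<^sub>v v)" unfolding u_def using mult_mat_vec_smult_K[OF dc vc(1) t(1)] .
  have "deform \<delta> t h \<in> carrier_mat n n" using deform_carrier h by blast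
  then have wc: "w \<in> carrier_vec n" and uc: "u \<in> carrier_vec n"
    unfolding w_def u_eq using dc vc by auto
  have "w - u = h *\<^sub>v v" unfolding w_def u_eq using deform_mult_vec h vc H_carrier dc by (intro eq_vecI) auto
  then have wu: "vnorm (w - u) \<le> op_bound * vnorm v" using vnorm_op_bound h vc by auto
  have "threshold * (expansion_const * vnorm v) \<le> av t * (expansion_const * vnorm v)"
    using t(2) expansion_const_pos V by (intro mult_right_mono) auto
  also have "\<dots> \<le> vnorm u"
    unfolding u_eq vnorm_smult[OF t(1)] using expand av_nonneg[OF t(1)] by (rule mult_left_mono)
  also have "\<dots> \<le> vnorm (u - w) + vnorm w" by (rule vnorm_le_diff_add[OF uc wc])
  finally have "threshold * (expansion_const * vnorm v) \<le> vnorm (u - w) + vnorm w" .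
  moreover have "threshold * (expansion_const * vnorm v) = op_bound * vnorm v + op_bound * vnorm v / eta"
    unfolding threshold_def using expansion_const_pos eta_pos by (simp add: field_simps)
  moreover have "vnorm (u - w) \<le> op_bound * vnorm v" using wu vnorm_minus_commute[OF uc wc] by simp
  ultimately have "op_bound * vnorm v / eta \<le> vnorm w" by linarith
  then have "op_bound * vnorm v \<le> eta * vnorm w" using eta_pos by (simp add: pos_divide_le_eq mult.commute)
  moreover have "op_bound * vnorm v > 0" using V op_bound_ge_1 by simp
  ultimately have "vnorm (w - \<delta> h *\<^sub>v (t \<cdot>\<^sub>v v)) \<le> eta * vnorm w" "w \<noteq> 0\<^sub>v n"
    using wu eta_pos unfolding u_def by auto
  then show ?thesis unfolding near_image_def w_def[symmetric] using wc h vc by auto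
qed

lemma near_image_expanded_disjoint: "near_image \<inter> expanded = {}"
proof (rule ccontr)
  assume "near_image \<inter> expanded \<noteq> {}"
  then obtain v where near: "v \<in> near_image" and exp: "v \<in> expanded" by blast
  obtain h x where vc: "v \<in> carrier_vec n" "v \<noteq> 0\<^sub>v n" and h: "h \<in> H - C" and x: "x \<in> carrier_vec n"
    and close: "vnorm (v - \<delta> h *\<^sub>v x) \<le> eta * vnorm v"
    using near unfolding near_image_def by blast
  have dc: "\<delta> h \<in> carrier_mat n n" using delta_carrier h by auto
  have "\<delta> h *\<^sub>v (\<delta> h *\<^sub>v x) = (\<delta> h * \<delta> h) *\<^sub>v x" using assoc_mult_mat_vec[OF dc dc x] by simp
  also have "\<dots> = 0\<^sub>v n" using delta_mult_delta[of h h] h x by (intro eq_vecI) auto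
  finally have "\<delta> h *\<^sub>v (\<delta> h *\<^sub>v x) = 0\<^sub>v n" .
  then have "\<delta> h *\<^sub>v v = \<delta> h *\<^sub>v (v - \<delta> h *\<^sub>v x)"
    using dc vc x by (simp add: mult_minus_distrib_mat_vec)
  then have "vnorm (\<delta> h *\<^sub>v v) \<le> op_bound * vnorm (v - \<delta> h *\<^sub>v x)"
    using vnorm_op_bound h vc dc x by auto
  also have "\<dots> \<le> op_bound * (eta * vnorm v)" using close op_bound_ge_1 by (intro mult_left_mono) auto
  also have "\<dots> = expansion_const * vnorm v / 2"
    unfolding eta_def expansion_const_def using op_bound_ge_1 by (simp add: power2_eq_square)
  finally have "vnorm (\<delta> h *\<^sub>v v) \<le> expansion_const * vnorm v / 2" .
  moreover have "expansion_const * vnorm v \<le> vnorm (\<delta> h *\<^sub>v v)" using exp h unfolding expanded_def by auto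
  moreover have "expansion_const * vnorm v > 0" using expansion_const_pos vnorm_pos vc by simp
  ultimately show False by linarith
qed

lemma near_image_nonempty:
  assumes h: "h \<in> H - C" shows "near_image \<noteq> {}"
proof -
  have dc: "\<delta> h \<in> carrier_mat n n" using delta_carrier h by auto
  have "\<delta> h \<noteq> 0\<^sub>m n n" using delta_eq_0_iff h by auto
  then obtain i j where ij: "i < n" "j < n" "\<delta> h $$ (i, j) \<noteq> 0"
    using dc by (metis carrier_matD eq_matI index_zero_mat(1-3))
  define v where "v = \<delta> h *\<^sub>v unit_vec n j"
  have vc: "v \<in> carrier_vec n" unfolding v_def using dc by auto
  have "v $ i = (\<Sum>k<n. \<delta> h $$ (i, k) * (if k = j then 1 else 0))"
    unfolding v_def using dc ij by (simp add: scalar_prod_def unit_vec_def atLeast0LessThan)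
  also have "\<dots> = \<delta> h $$ (i, j)" using ij by (simp add: if_distrib cong: if_cong)
  finally have v0: "v \<noteq> 0\<^sub>v n" using ij by auto
  have "v - \<delta> h *\<^sub>v unit_vec n j = 0\<^sub>v n" unfolding v_def using dc by (intro eq_vecI) auto
  then have "vnorm (v - \<delta> h *\<^sub>v unit_vec n j) \<le> eta * vnorm v"
    using eta_pos vnorm_nonneg[of v] by simp
  then have "v \<in> near_image"
    unfolding near_image_def using vc v0 h unit_vec_carrier[of n j] by blast
  then show ?thesis by blast
qed

lemma deformed_letter:
  assumes g: "g \<in> deformed t - C" obtains h where "h \<in> H - C" "g = deform \<delta> t h"
proof -
  obtain h where h: "h \<in> H" "g = deform \<delta> t h" using g by blast
  moreover have "h \<notin> C" using h g deform_C by auto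
  ultimately show thesis using that by blast
qed

theorem deformed_canonical_iso:
  assumes t: "t \<in> K" "t \<noteq> 0" "threshold \<le> av t"
    and index: "sub_index A C > 2 \<or> sub_index H C > 2"
  shows "amalg_canonical_iso n A C (deformed t)"
proof -
  interpret amalgam n A C "deformed t" using amalgam_deformed[OF t(1)] .
  have "sub_index (deformed t) C = sub_index H C"
    by (rule sub_index_image[OF inj_on_deform[OF t(1,2)]])
      (use deform_mult[OF t(1)] deform_C subgroup_GL_mult[OF subgroup_H] C_H in auto)
  then have index': "sub_index A C > 2 \<or> sub_index (deformed t) C > 2" using index by simp
  let ?Y = "\<lambda>b. if b then expanded else near_image"
  have act: "g *\<^sub>v v \<in> ?Y b" if g: "g \<in> factor b - C" and v: "v \<in> ?Y (\<not> b)" for b g v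
  proof (cases b)
    case True
    then show ?thesis using A_maps_near_image_into_expanded g v by simp
  next
    case False
    then have "g \<in> deformed t - C" using g by simp
    then obtain h where "h \<in> H - C" "g = deform \<delta> t h" by (rule deformed_letter)
    then show ?thesis using deform_maps_expanded_into_near_image[OF t(1,3)] v False by simp
  qed
  have nonempty: "?Y b \<noteq> {}" if A_C: "A - C \<noteq> {}" and B_C: "deformed t - C \<noteq> {}" for b
  proof -
    obtain a where a: "a \<in> A - C" using A_C by blast
    obtain h where h: "h \<in> H - C" using B_C deformed_letter by blast
    obtain v where v: "v \<in> near_image" using near_image_nonempty[OF h] by blast
    then show ?thesis using A_maps_near_image_into_expanded[OF a v] by (cases b) auto
  qed
  show ?thesis
  proof (rule ping_pong_canonical_iso[OF index', of ?Y])
    show "?Y b \<subseteq> carrier_vec n" for b unfolding near_image_def expanded_def by auto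
    show "?Y True \<inter> ?Y False = {}" using near_image_expanded_disjoint by auto
  qed (use act nonempty in auto)
qed

theorem deformation_amalgam:
  assumes "sub_index A C > 2 \<or> sub_index H C > 2"
  shows "\<exists>N::real. \<forall>t\<in>K. t \<noteq> 0 \<longrightarrow> av t \<ge> N \<longrightarrow>
    amalg_canonical_iso n A C (deformed t) \<and> amalg_induced_iso n (deform \<delta> t) A C H (deformed t)"
proof (intro exI[of _ threshold] ballI impI conjI)
  fix t assume "t \<in> K" "t \<noteq> 0" "threshold \<le> av t"
  then show "amalg_canonical_iso n A C (deformed t)" "amalg_induced_iso n (deform \<delta> t) A C H (deformed t)"
    using deformed_canonical_iso[OF _ _ _ assms] deformed_induced_iso by auto
qed

end

theorem theorem4p8:
  fixes K :: "'d::division_ring set" and av :: "'d \<Rightarrow> real"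
    and n :: nat and A H C :: "'d mat set" and \<delta> :: "'d mat \<Rightarrow> 'd mat"
  assumes "is_local_field K av" and "char_zero_ring TYPE('d)" and "finite_dim_over K"
    and "finite_subgroup_GL n A" and "finite_subgroup_GL n H"
    and "C = A \<inter> H"
    and "sub_index A C > 2 \<or> sub_index H C > 2"
    and "first_order_deformation n H \<delta>"
    and "\<forall>t\<in>K. t \<noteq> 0 \<longrightarrow> (\<forall>h\<in>H. deform \<delta> t h \<in> GL_mat n)"
    and "\<forall>g\<in>H. \<delta> g = 0\<^sub>m n n \<longleftrightarrow> g \<in> C"
    and "\<forall>a\<in>A - C. \<forall>h\<in>H - C. \<forall>h'\<in>H - C.
           ((\<lambda>w. a *\<^sub>v w) ` mat_im n (\<delta> h)) \<inter> mat_ker n (\<delta> h') = {0\<^sub>v n}"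
  shows "\<exists>N::real. \<forall>t\<in>K. t \<noteq> 0 \<longrightarrow> av t \<ge> N \<longrightarrow>
           amalg_canonical_iso n A C (deform \<delta> t ` H) \<and>
           amalg_induced_iso n (deform \<delta> t) A C H (deform \<delta> t ` H)"
proof -
  (* Of the local-field structure only the central subfield with its absolute value is used. *)
  have K: "central_valued_subfield K av"
    using assms(1) unfolding is_local_field_def central_valued_subfield_def by blast
  obtain S where "central_valued_subfield.K_spanning K S" "central_valued_subfield.K_independent K S"
    using central_valued_subfield.obtain_K_basis[OF K assms(3)] by blast
  then interpret deformation K av S n A H C \<delta>
    using K assms(2,4-6,8,10,11) unfolding central_valued_subfield_def
    by unfold_locales (auto simp: K_basis_axioms_def)
  show ?thesis using deformation_amalgam[OF assms(7)] .
qed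

end
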